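(* Let $X_n\sim\mathrm{Beta}_p(a_n,a_n)$ where $a_n/n\to\gamma\in(0,\infty)$. Then (i) $X_n\to\tfrac12I_p$ in $L^2$ (i.e. $\mathbb{E}\|X_n-\tfrac12I_p\|^2\to0$ for the Frobenius norm), and (ii) $\sqrt{8\gamma n}\,(X_n-\tfrac12I_p)\xrightarrow{\mathcal{D}}G$ as $n\to\infty$, where $G$ is GOE distributed.
   Context: $\mathcal{S}_p(\mathbb{R})$: real symmetric $p\times p$ matrices with Lebesgue measure $dX=\prod_{i\le j}dx_{i,j}$ and Frobenius norm $\|X\|=\sqrt{\operatorname{tr}X^2}$. $\mathrm{Beta}_p(a,b)$ ($a,b>\tfrac12(p-1)$) has density $B_p(a,b)^{-1}(\det X)^{a-(p+1)/2}\det(I_p-X)^{b-(p+1)/2}\mathbf{1}_{\{0_p<X<I_p\}}$, with $B_p(a,b)=\Gamma_p(a)\Gamma_p(b)/\Gamma_p(a+b)$, $\Gamma_p(a)=\pi^{p(p-1)/4}\prod_{i=1}^p\Gamma(a-\tfrac12(i-1))$. GOE: density $(2\pi)^{-p/2}\pi^{-p(p-1)/4}e^{-\frac12\operatorname{tr}X^2}$ with respect to $dX$. *)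

theory Defs
  imports "HOL-Probability.Probability"
begin

text \<open>Real symmetric p x p matrices (p a natural number, indices 0..p-1) are parametrised
  by their upper-triangular entries x(i,j), i \<le> j < p.  Lebesgue measure
  dX = prod_{i\<le>j} dx_ij is the product of lborel over these coordinates.\<close>

definition utri :: "nat \<Rightarrow> (nat \<times> nat) set" where
  "utri p = {(i, j). i \<le> j \<and> j < p}"

definition smat_lebesgue :: "nat \<Rightarrow> (nat \<times> nat \<Rightarrow> real) measure" where
  "smat_lebesgue p = PiM (utri p) (\<lambda>_. lborel)"

definition symm :: "(nat \<times> nat \<Rightarrow> real) \<Rightarrow> nat \<Rightarrow> nat \<Rightarrow> real" where
  "symm x = (\<lambda>i j. x (min i j, max i j))"

definition idm :: "nat \<Rightarrow> nat \<Rightarrow> real" where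
  "idm = (\<lambda>i j. if i = j then 1 else 0)"

definition mdet :: "nat \<Rightarrow> (nat \<Rightarrow> nat \<Rightarrow> real) \<Rightarrow> real" where
  "mdet p A = (\<Sum>\<sigma> | \<sigma> permutes {..<p}. of_int (sign \<sigma>) * (\<Prod>i<p. A i (\<sigma> i)))"

definition mtrace :: "nat \<Rightarrow> (nat \<Rightarrow> nat \<Rightarrow> real) \<Rightarrow> real" where
  "mtrace p A = (\<Sum>i<p. A i i)"

definition mmult :: "nat \<Rightarrow> (nat \<Rightarrow> nat \<Rightarrow> real) \<Rightarrow> (nat \<Rightarrow> nat \<Rightarrow> real) \<Rightarrow> nat \<Rightarrow> nat \<Rightarrow> real" where
  "mmult p A B = (\<lambda>i j. \<Sum>k<p. A i k * B k j)"

definition posdef :: "nat \<Rightarrow> (nat \<Rightarrow> nat \<Rightarrow> real) \<Rightarrow> bool" where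
  "posdef p A \<longleftrightarrow> (\<forall>v::nat \<Rightarrow> real. (\<exists>i<p. v i \<noteq> 0) \<longrightarrow>
      (\<Sum>i<p. \<Sum>j<p. v i * A i j * v j) > 0)"

definition frob_norm :: "nat \<Rightarrow> (nat \<Rightarrow> nat \<Rightarrow> real) \<Rightarrow> real" where
  "frob_norm p A = sqrt (mtrace p (mmult p A A))"

definition mgamma :: "nat \<Rightarrow> real \<Rightarrow> real" where
  "mgamma p a = pi powr (real p * (real p - 1) / 4) * (\<Prod>i=1..p. Gamma (a - (real i - 1) / 2))"

definition mbeta :: "nat \<Rightarrow> real \<Rightarrow> real \<Rightarrow> real" where
  "mbeta p a b = mgamma p a * mgamma p b / mgamma p (a + b)"

definition beta_density :: "nat \<Rightarrow> real \<Rightarrow> real \<Rightarrow> (nat \<times> nat \<Rightarrow> real) \<Rightarrow> real" where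
  "beta_density p a b x =
     (if posdef p (symm x) \<and> posdef p (\<lambda>i j. idm i j - symm x i j)
      then mdet p (symm x) powr (a - (real p + 1) / 2)
           * mdet p (\<lambda>i j. idm i j - symm x i j) powr (b - (real p + 1) / 2) / mbeta p a b
      else 0)"

definition goe_density :: "nat \<Rightarrow> (nat \<times> nat \<Rightarrow> real) \<Rightarrow> real" where
  "goe_density p x = (2 * pi) powr (- real p / 2) * pi powr (- real p * (real p - 1) / 4)
     * exp (- mtrace p (mmult p (symm x) (symm x)) / 2)"

definition goe_measure :: "nat \<Rightarrow> (nat \<times> nat \<Rightarrow> real) measure" where
  "goe_measure p = density (smat_lebesgue p) (\<lambda>x. ennreal (goe_density p x))"

definition weak_conv_smat ::
  "nat \<Rightarrow> (nat \<Rightarrow> (nat \<times> nat \<Rightarrow> real) measure) \<Rightarrow> (nat \<times> nat \<Rightarrow> real) measure \<Rightarrow> bool" where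
  "weak_conv_smat p Ms M \<longleftrightarrow>
     (\<forall>f :: (nat \<times> nat \<Rightarrow> real) \<Rightarrow> real.
        continuous_on (space (smat_lebesgue p)) f \<longrightarrow> bounded (f ` space (smat_lebesgue p)) \<longrightarrow>
        f \<in> borel_measurable (smat_lebesgue p) \<longrightarrow>
        (\<lambda>n. \<integral>x. f x \<partial>(Ms n)) \<longlonglongrightarrow> (\<integral>x. f x \<partial>M))"

end

theory Submission
  imports Defs "Jordan_Normal_Form.Determinant"
begin

text \<open>
  The idea: substitute X = I/2 + c Z with c = 1/sqrt(8 \<gamma> n).  Since
  det(I/2 + cZ) det(I/2 - cZ) = 4^(-p) det(I - 4c^2 Z^2), the Beta density becomes, up to a
  normalising constant, the kernel det(I - 4c^2 Z^2)^(a - (p+1)/2) (on the set where both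
  factors are positive definite).  Differentiating the determinant at the identity shows that
  this kernel converges pointwise to the Gaussian exp(-tr Z^2 / 2), and Hadamard's inequality
  bounds it by exp(-tr Z^2 / 4).  Dominated convergence then gives convergence of all
  kernel integrals, so every expectation E g(X_n) -- written as a ratio of kernel integrals --
  converges.  Part (i) is the case g(X) = ||X - I/2||^2 = c^2 tr Z^2, part (ii) the case of a
  bounded continuous test function of the rescaled matrix Z, whose limit is the GOE integral.
\<close>

section \<open>Determinants\<close>

definition to_mat :: "nat \<Rightarrow> (nat \<Rightarrow> nat \<Rightarrow> real) \<Rightarrow> real Matrix.mat" where
  "to_mat p A = Matrix.mat p p (\<lambda>(i,j). A i j)"

lemma to_mat_carrier [simp]: "to_mat p A \<in> carrier_mat p p"
  unfolding to_mat_def by simp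

lemma to_mat_dims [simp]: "dim_row (to_mat p A) = p" "dim_col (to_mat p A) = p"
  unfolding to_mat_def by auto

lemma mdet_det: "mdet p A = Determinant.det (to_mat p A)"
  unfolding mdet_def
  by (subst det_def'[of _ p]) (auto simp: to_mat_def atLeast0LessThan intro!: sum.cong prod.cong)

lemma mdet_mult: "mdet p (mmult p A B) = mdet p A * mdet p B"
proof -
  have "to_mat p (mmult p A B) = to_mat p A * to_mat p B"
    by (rule eq_matI) (auto simp: to_mat_def mmult_def scalar_prod_def atLeast0LessThan intro!: sum.cong)
  then show ?thesis by (simp add: mdet_det det_mult[of _ p])
qed

lemma mdet_idm: "mdet p idm = 1"
proof -
  have "to_mat p idm = 1\<^sub>m p" by (rule eq_matI) (auto simp: to_mat_def idm_def)
  then show ?thesis by (simp add: mdet_det)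
qed

lemma mdet_scale: "mdet p (\<lambda>i j. c * A i j) = c ^ p * mdet p A"
proof -
  have "to_mat p (\<lambda>i j. c * A i j) = c \<cdot>\<^sub>m to_mat p A" by (rule eq_matI) (auto simp: to_mat_def)
  then show ?thesis by (simp add: mdet_det)
qed

lemma mdet_cong: "(\<And>i j. i < p \<Longrightarrow> j < p \<Longrightarrow> A i j = B i j) \<Longrightarrow> mdet p A = mdet p B"
  unfolding mdet_def
  by (intro sum.cong refl arg_cong2[where f="(*)"] prod.cong) (auto, metis lessThan_iff permutes_in_image)

lemma posdef_cong:
  assumes "\<And>i j. i < p \<Longrightarrow> j < p \<Longrightarrow> A i j = B i j"
  shows "posdef p A = posdef p B"
proof -
  have "(\<Sum>i<p. \<Sum>j<p. v i * A i j * v j) = (\<Sum>i<p. \<Sum>j<p. v i * B i j * v j)" for v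
    using assms by (intro sum.cong refl) auto
  then show ?thesis unfolding posdef_def by simp
qed

lemma mdet_schur:
  fixes A :: "nat \<Rightarrow> nat \<Rightarrow> real"
  assumes a: "A p p \<noteq> 0"
  shows "mdet (Suc p) A = A p p * mdet p (\<lambda>i j. A i j - A i p * A p j / A p p)"
proof -
  define n where "n = Suc p"
  define E :: "real Matrix.mat" where
    "E = Matrix.mat n n (\<lambda>(i,j). if i = j then 1 else if j = p then - A i p / A p p else 0)"
  have Ec: "E \<in> carrier_mat n n" by (simp add: E_def)
  have ut: "upper_triangular E" unfolding upper_triangular_def E_def n_def by auto
  have "diag_mat E = map (\<lambda>_. 1) [0..<n]"
    unfolding diag_mat_def E_def by (intro map_cong) auto
  moreover have "prod_list (map (\<lambda>_. 1::real) xs) = 1" for xs :: "nat list" by (induct xs) auto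
  ultimately have dE: "Determinant.det E = 1"
    using det_upper_triangular[OF ut Ec] by simp
  define C where "C = E * to_mat n A"
  have Cc: "C \<in> carrier_mat n n" unfolding C_def using Ec by auto
  have dC: "Determinant.det C = mdet n A"
    unfolding C_def mdet_det by (simp add: det_mult[OF Ec to_mat_carrier] dE)
  have Cij: "C $$ (i,j) = (if i < p then A i j - A i p / A p p * A p j else A p j)"
    if "i < n" "j < n" for i j
  proof -
    have "C $$ (i,j) = (\<Sum>k<Suc p. E $$ (i,k) * A k j)"
      using that Ec unfolding C_def
      by (simp add: scalar_prod_def n_def atLeast0LessThan to_mat_def)
    also have "\<dots> = (\<Sum>k<p. E $$ (i,k) * A k j) + E $$ (i,p) * A p j" by simp
    also have "(\<Sum>k<p. E $$ (i,k) * A k j) = (\<Sum>k<p. if k = i then A i j else 0)"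
      using that by (intro sum.cong refl) (auto simp: E_def n_def)
    also have "E $$ (i,p) = (if i = p then 1 else - A i p / A p p)"
      using that by (auto simp: E_def n_def)
    finally show ?thesis using that by (auto simp: n_def)
  qed
  have "Determinant.det C = (\<Sum>i<n. C $$ (i,p) * cofactor C i p)"
    by (rule laplace_expansion_column[OF Cc]) (simp add: n_def)
  also have "\<dots> = (\<Sum>i<n. if i = p then A p p * cofactor C p p else 0)"
    using a by (intro sum.cong refl) (auto simp: Cij n_def)
  also have "\<dots> = A p p * cofactor C p p" by (simp add: n_def)
  also have "mat_delete C p p = to_mat p (\<lambda>i j. A i j - A i p * A p j / A p p)"
    using Cc by (intro eq_matI) (auto simp: mat_delete_def to_mat_def Cij n_def)
  then have "cofactor C p p = mdet p (\<lambda>i j. A i j - A i p * A p j / A p p)"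
    by (simp add: cofactor_def mdet_det)
  finally show ?thesis using dC by (simp add: n_def)
qed

text \<open>A permutation other than the identity moves some index outside any given singleton,
  so the corresponding product of identity-matrix entries vanishes.\<close>

lemma prod_idm_nonid_perm:
  assumes s: "\<sigma> permutes {..<p}" "\<sigma> \<noteq> id" and j: "j < p"
  shows "(\<Prod>i\<in>{..<p} - {j}. idm i (\<sigma> i)) = 0"
proof -
  obtain m where m: "\<sigma> m \<noteq> m" using s(2) by (metis eq_id_iff)
  then have mp: "m < p" using s(1) by (meson lessThan_iff permutes_def)
  have "\<exists>i\<in>{..<p} - {j}. \<sigma> i \<noteq> i"
  proof (cases "\<sigma> j = j")
    case True then show ?thesis using m mp by (intro bexI[of _ m]) auto
  next
    case False
    have "\<sigma> j < p" using permutes_in_image[OF s(1), of j] j by simp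
    moreover have "\<sigma> (\<sigma> j) \<noteq> \<sigma> j"
      using False permutes_inj[OF s(1)] by (metis injD)
    ultimately show ?thesis using False by (intro bexI[of _ "\<sigma> j"]) auto
  qed
  then obtain i where "i \<in> {..<p} - {j}" "\<sigma> i \<noteq> i" by auto
  then show ?thesis by (intro prod_zero) (auto simp: idm_def intro!: bexI[of _ i])
qed

lemma mdet_id_minus_deriv:
  "((\<lambda>e. mdet p (\<lambda>i j. idm i j - e * B i j)) has_field_derivative (- mtrace p B)) (at 0)"
proof -
  define P where "P = {\<sigma>. \<sigma> permutes {..<p}}"
  define D where "D = (\<lambda>\<sigma>. (of_int (sign \<sigma>) :: real) * (\<Sum>j<p. (- B j (\<sigma> j)) *
        (\<Prod>i\<in>{..<p} - {j}. idm i (\<sigma> i) - 0 * B i (\<sigma> i))))"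
  have "((\<lambda>e. mdet p (\<lambda>i j. idm i j - e * B i j)) has_field_derivative (\<Sum>\<sigma>\<in>P. D \<sigma>)) (at 0)"
    unfolding mdet_def P_def[symmetric] D_def
    by (intro DERIV_sum DERIV_cmult has_field_derivative_prod derivative_eq_intros) auto
  moreover have "(\<Sum>\<sigma>\<in>P. D \<sigma>) = - mtrace p B"
  proof -
    have "id \<in> P" "finite P" unfolding P_def by (simp_all add: permutes_id finite_permutations)
    then have "(\<Sum>\<sigma>\<in>P. D \<sigma>) = D id + (\<Sum>\<sigma>\<in>P - {id}. D \<sigma>)"
      by (simp add: sum.remove)
    also have "(\<Sum>\<sigma>\<in>P - {id}. D \<sigma>) = 0"
    proof (intro sum.neutral ballI)
      fix \<sigma> assume "\<sigma> \<in> P - {id}"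
      then have s1: "\<sigma> permutes {..<p}" and s2: "\<sigma> \<noteq> id" unfolding P_def by auto
      have z: "(\<Prod>i\<in>{..<p} - {j}. idm i (\<sigma> i) - 0 * B i (\<sigma> i)) = 0" if "j \<in> {..<p}" for j
        using prod_idm_nonid_perm[OF s1 s2, of j] that by simp
      have "(\<Sum>j<p. (- B j (\<sigma> j)) * (\<Prod>i\<in>{..<p} - {j}. idm i (\<sigma> i) - 0 * B i (\<sigma> i))) = 0"
        by (intro sum.neutral ballI) (simp only: z mult_zero_right)
      then show "D \<sigma> = 0" unfolding D_def by simp
    qed
    also have "D id = (\<Sum>j<p. - B j j)"
    proof -
      have "(\<Prod>i\<in>{..<p} - {j}. idm i (id i) - 0 * B i (id i)) = 1" for j
        by (intro prod.neutral) (auto simp: idm_def)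
      then show ?thesis unfolding D_def by simp
    qed
    finally show ?thesis by (simp add: mtrace_def sum_negf)
  qed
  ultimately show ?thesis by simp
qed

section \<open>Positive definite matrices\<close>

definition symmetric_on :: "nat \<Rightarrow> (nat \<Rightarrow> nat \<Rightarrow> real) \<Rightarrow> bool" where
  "symmetric_on p A \<longleftrightarrow> (\<forall>i<p. \<forall>j<p. A i j = A j i)"

lemma posdef_diag:
  assumes "posdef p A" "k < p" shows "A k k > 0"
proof -
  let ?v = "\<lambda>i. if i = k then 1 else (0::real)"
  have "(\<Sum>i<p. \<Sum>j<p. ?v i * A i j * ?v j) > 0"
    using assms unfolding posdef_def by (intro assms(1)[unfolded posdef_def, rule_format]) auto
  also have "(\<Sum>i<p. \<Sum>j<p. ?v i * A i j * ?v j) = A k k"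
  proof -
    have eq: "\<And>i j. ?v i * A i j * ?v j = (if j = k then (if i = k then A k k else 0) else 0)" by auto
    show ?thesis using assms(2) by (simp only: eq sum.delta' if_True) simp
  qed
  finally show ?thesis .
qed

text \<open>The quadratic form of the Schur complement of the entry A p p is a restriction of the
  quadratic form of A, hence Schur complements of positive definite matrices are positive definite.\<close>

lemma schur_complement_qform:
  fixes A :: "nat \<Rightarrow> nat \<Rightarrow> real" and v :: "nat \<Rightarrow> real"
  assumes sym: "symmetric_on (Suc p) A" and a: "A p p \<noteq> 0"
  defines "b \<equiv> (\<Sum>j<p. A p j * v j)"
  defines "w \<equiv> (\<lambda>i. if i < p then v i else if i = p then - b / A p p else 0)"
  shows "(\<Sum>i<Suc p. \<Sum>j<Suc p. w i * A i j * w j)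
       = (\<Sum>i<p. \<Sum>j<p. v i * (A i j - A i p * A p j / A p p) * v j)"
proof -
  have b2: "(\<Sum>i<p. v i * A i p) = b"
    unfolding b_def using sym by (auto simp: symmetric_on_def mult.commute intro!: sum.cong)
  define c where "c = - b / A p p"
  have wl: "i < p \<Longrightarrow> w i = v i" for i by (simp add: w_def)
  have wp: "w p = c" by (simp add: w_def c_def)
  have inner: "(\<Sum>j<Suc p. w i * A i j * w j) = (\<Sum>j<p. w i * A i j * v j) + w i * A i p * c" for i
    by (simp add: wl wp)
  have "(\<Sum>i<Suc p. \<Sum>j<Suc p. w i * A i j * w j)
     = (\<Sum>i<Suc p. (\<Sum>j<p. w i * A i j * v j) + w i * A i p * c)"
    by (simp only: inner)
  also have "\<dots> = (\<Sum>i<p. (\<Sum>j<p. v i * A i j * v j) + v i * A i p * c)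
        + ((\<Sum>j<p. c * A p j * v j) + c * A p p * c)"
    by (simp only: sum.lessThan_Suc wp) (intro arg_cong2[where f="(+)"] sum.cong refl, auto simp: wl)
  also have "\<dots> = (\<Sum>i<p. \<Sum>j<p. v i * A i j * v j) + (\<Sum>i<p. v i * A i p) * c
       + c * (\<Sum>j<p. A p j * v j) + c * A p p * c"
    by (simp add: sum.distrib sum_distrib_left sum_distrib_right mult.assoc)
  finally have e1: "(\<Sum>i<Suc p. \<Sum>j<Suc p. w i * A i j * w j) = (\<Sum>i<p. \<Sum>j<p. v i * A i j * v j) + (\<Sum>i<p. v i * A i p) * c
       + c * (\<Sum>j<p. A p j * v j) + c * A p p * c" .
  have "(\<Sum>i<Suc p. \<Sum>j<Suc p. w i * A i j * w j)
     = (\<Sum>i<p. \<Sum>j<p. v i * A i j * v j) + (\<Sum>i<p. v i * A i p) * (- b / A p p)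
       + (- b / A p p) * (\<Sum>j<p. A p j * v j) + (- b / A p p) * A p p * (- b / A p p)"
    using e1 by (simp add: c_def)
  also have "\<dots> = (\<Sum>i<p. \<Sum>j<p. v i * A i j * v j) - b * b / A p p"
    using a by (simp only: b2 b_def[symmetric]) (simp add: field_simps)
  also have "(\<Sum>i<p. \<Sum>j<p. v i * (A i j - A i p * A p j / A p p) * v j)
      = (\<Sum>i<p. \<Sum>j<p. v i * A i j * v j) - (\<Sum>i<p. v i * A i p) * (\<Sum>j<p. A p j * v j) / A p p"
  proof -
    have "(\<Sum>i<p. \<Sum>j<p. v i * (A i j - A i p * A p j / A p p) * v j)
      = (\<Sum>i<p. \<Sum>j<p. v i * A i j * v j - (v i * A i p) * (A p j * v j) / A p p)"
      by (intro sum.cong refl) (simp add: algebra_simps)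
    also have "\<dots> = (\<Sum>i<p. \<Sum>j<p. v i * A i j * v j) - (\<Sum>i<p. \<Sum>j<p. (v i * A i p) * (A p j * v j)) / A p p"
      by (simp only: sum_subtractf sum_divide_distrib)
    also have "(\<Sum>i<p. \<Sum>j<p. (v i * A i p) * (A p j * v j)) = (\<Sum>i<p. v i * A i p) * (\<Sum>j<p. A p j * v j)"
      by (simp only: sum_product)
    finally show ?thesis .
  qed
  ultimately show ?thesis by (simp add: b2 b_def)
qed

lemma hadamard_inequality:
  "symmetric_on p A \<Longrightarrow> posdef p A \<Longrightarrow> 0 < mdet p A \<and> mdet p A \<le> (\<Prod>i<p. A i i)"
proof (induction p arbitrary: A)
  case 0
  then show ?case by (simp add: mdet_def)
next
  case (Suc p)
  define a where "a = A p p"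
  have a: "a > 0" unfolding a_def using posdef_diag[OF Suc.prems(2)] by simp
  define A' where "A' = (\<lambda>i j. A i j - A i p * A p j / A p p)"
  have sA': "symmetric_on p A'"
    using Suc.prems(1) unfolding symmetric_on_def A'_def by (auto simp: mult.commute)
  have pA': "posdef p A'"
    unfolding posdef_def
  proof (intro allI impI)
    fix v :: "nat \<Rightarrow> real" assume "\<exists>i<p. v i \<noteq> 0"
    then obtain i where i: "i < p" "v i \<noteq> 0" by auto
    define w where "w = (\<lambda>i. if i < p then v i else if i = p then - (\<Sum>j<p. A p j * v j) / A p p else 0)"
    have "(\<Sum>i<Suc p. \<Sum>j<Suc p. w i * A i j * w j) > 0"
      using Suc.prems(2) i unfolding posdef_def w_def
      by (intro Suc.prems(2)[unfolded posdef_def, rule_format]) (auto intro!: exI[of _ i])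
    also have "(\<Sum>i<Suc p. \<Sum>j<Suc p. w i * A i j * w j) = (\<Sum>i<p. \<Sum>j<p. v i * A' i j * v j)"
      unfolding w_def A'_def using Suc.prems(1) a a_def by (intro schur_complement_qform) auto
    finally show "(\<Sum>i<p. \<Sum>j<p. v i * A' i j * v j) > 0" .
  qed
  from Suc.IH[OF sA' pA'] have ih: "0 < mdet p A'" "mdet p A' \<le> (\<Prod>i<p. A' i i)" by auto
  have "(\<Prod>i<p. A' i i) \<le> (\<Prod>i<p. A i i)"
  proof (rule prod_mono)
    fix i assume "i \<in> {..<p}"
    then have "A' i i > 0" using posdef_diag[OF pA'] by auto
    moreover have "A' i i \<le> A i i"
      using a Suc.prems(1) \<open>i \<in> {..<p}\<close> unfolding A'_def a_def symmetric_on_def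
      by (auto simp: divide_nonneg_pos)
    ultimately show "0 \<le> A' i i \<and> A' i i \<le> A i i" by auto
  qed
  moreover have "mdet (Suc p) A = a * mdet p A'"
    unfolding a_def A'_def using a a_def by (intro mdet_schur) auto
  ultimately show ?case using ih a
    by (simp add: a_def[symmetric] mult.commute[of _ a])
qed

definition qform :: "nat \<Rightarrow> (nat \<Rightarrow> nat \<Rightarrow> real) \<Rightarrow> (nat \<Rightarrow> real) \<Rightarrow> (nat \<Rightarrow> real) \<Rightarrow> real" where
  "qform p A u w = (\<Sum>i<p. \<Sum>j<p. u i * A i j * w j)"

lemma qform_alt: "qform p A u w = (\<Sum>i<p. u i * (\<Sum>j<p. A i j * w j))"
  unfolding qform_def by (simp add: sum_distrib_left mult.assoc)

lemma qform_alt2: "qform p A u w = (\<Sum>j<p. (\<Sum>i<p. u i * A i j) * w j)"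
  unfolding qform_def by (subst sum.swap) (simp add: sum_distrib_right)

lemma qform_sub: "qform p (\<lambda>i j. A i j - B i j) u w = qform p A u w - qform p B u w"
  unfolding qform_def by (simp add: algebra_simps sum_subtractf)

lemma qform_idm: "qform p idm u w = (\<Sum>i<p. u i * w i)"
proof -
  have eq: "\<And>i j. idm i j * w j = (if j = i then w i else 0)" by (auto simp: idm_def)
  show ?thesis unfolding qform_alt by (simp only: eq sum.delta') simp
qed

lemma qform_mmult: "qform p (mmult p A B) v w = (\<Sum>k<p. (\<Sum>i<p. v i * A i k) * (\<Sum>j<p. B k j * w j))"
proof -
  have "qform p (mmult p A B) v w = (\<Sum>i<p. \<Sum>j<p. \<Sum>k<p. v i * A i k * (B k j * w j))"
    unfolding qform_def mmult_def by (simp add: sum_distrib_left sum_distrib_right mult.assoc)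
  also have "\<dots> = (\<Sum>k<p. \<Sum>i<p. \<Sum>j<p. v i * A i k * (B k j * w j))"
  proof -
    have "(\<Sum>j<p. \<Sum>k<p. v i * A i k * (B k j * w j)) = (\<Sum>k<p. \<Sum>j<p. v i * A i k * (B k j * w j))" for i
      by (rule sum.swap)
    then have "(\<Sum>i<p. \<Sum>j<p. \<Sum>k<p. v i * A i k * (B k j * w j)) = (\<Sum>i<p. \<Sum>k<p. \<Sum>j<p. v i * A i k * (B k j * w j))"
      by simp
    also have "\<dots> = (\<Sum>k<p. \<Sum>i<p. \<Sum>j<p. v i * A i k * (B k j * w j))"
      by (rule sum.swap)
    finally show ?thesis .
  qed
  also have "\<dots> = (\<Sum>k<p. (\<Sum>i<p. v i * A i k) * (\<Sum>j<p. B k j * w j))"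
    by (simp only: sum_product)
  finally show ?thesis .
qed

lemma qform_sym: "symmetric_on p A \<Longrightarrow> qform p A u w = qform p A w u"
  unfolding qform_def symmetric_on_def
  by (subst sum.swap) (auto intro!: sum.cong simp: mult_ac)

lemma qform_expand:
  assumes "symmetric_on p A"
  shows "qform p A (\<lambda>i. u i + t * v i) (\<lambda>i. u i + t * v i) = qform p A u u + 2 * t * qform p A u v + t\<^sup>2 * qform p A v v"
proof -
  have "qform p A (\<lambda>i. u i + t * v i) (\<lambda>i. u i + t * v i) = qform p A u u + t * qform p A u v + t * qform p A v u + t\<^sup>2 * qform p A v v"
  proof -
    have "qform p A (\<lambda>i. u i + t * v i) (\<lambda>i. u i + t * v i) = (\<Sum>i<p. \<Sum>j<p. u i * A i j * u j + t * (u i * A i j * v j) + t * (v i * A i j * u j) + t\<^sup>2 * (v i * A i j * v j))"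
      unfolding qform_def by (intro sum.cong refl) (simp add: algebra_simps power2_eq_square)
    also have "\<dots> = qform p A u u + t * qform p A u v + t * qform p A v u + t\<^sup>2 * qform p A v v"
      unfolding qform_def by (simp only: sum.distrib sum_distrib_left)
    finally show ?thesis .
  qed
  then show ?thesis using qform_sym[OF assms, of v u] by simp
qed

lemma posdef_nonneg: "posdef p A \<Longrightarrow> qform p A v v \<ge> 0"
proof (cases "\<exists>i<p. v i \<noteq> 0")
  case True
  assume "posdef p A"
  then show ?thesis using True unfolding posdef_def qform_def by (auto intro: less_imp_le)
next
  case False
  then show ?thesis unfolding qform_def by auto
qed

lemma qform_cauchy_schwarz:
  assumes sym: "symmetric_on p A" and nn: "\<And>w. qform p A w w \<ge> 0"
  shows "(qform p A u v)\<^sup>2 \<le> qform p A u u * qform p A v v"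
proof (cases "qform p A v v = 0")
  case True
  have "qform p A u v = 0"
  proof (rule ccontr)
    assume ne: "qform p A u v \<noteq> 0"
    define t where "t = - (qform p A u u + 1) / (2 * qform p A u v)"
    have "0 \<le> qform p A (\<lambda>i. u i + t * v i) (\<lambda>i. u i + t * v i)" by (rule nn)
    also have "\<dots> = qform p A u u + 2 * t * qform p A u v" using qform_expand[OF sym] True by simp
    also have "\<dots> = -1" using ne by (simp add: t_def field_simps)
    finally show False by simp
  qed
  then show ?thesis using True by simp
next
  case False
  then have pos: "qform p A v v > 0" using nn[of v] by auto
  define t where "t = - qform p A u v / qform p A v v"
  have "0 \<le> qform p A (\<lambda>i. u i + t * v i) (\<lambda>i. u i + t * v i)" by (rule nn)
  also have "\<dots> = qform p A u u + 2 * t * qform p A u v + t\<^sup>2 * qform p A v v" using qform_expand[OF sym] by simp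
  also have "\<dots> = qform p A u u - (qform p A u v)\<^sup>2 / qform p A v v"
    using pos by (simp add: t_def field_simps power2_eq_square)
  finally have "(qform p A u v)\<^sup>2 / qform p A v v \<le> qform p A u u" by simp
  then show ?thesis using pos by (simp add: divide_le_eq mult.commute)
qed

lemma posdef_qform: "posdef p A \<Longrightarrow> \<exists>i<p. v i \<noteq> 0 \<Longrightarrow> qform p A v v > 0"
  unfolding posdef_def qform_def by auto

lemma posdef_iff_qform: "posdef p A \<longleftrightarrow> (\<forall>v. (\<exists>i<p. v i \<noteq> 0) \<longrightarrow> qform p A v v > 0)"
  unfolding posdef_def qform_def by auto

text \<open>If X and I - X are positive definite (X symmetric), so is X(I - X): for u = Xv,
  v^T X(I-X) v = v^T X v - |u|^2, and Cauchy-Schwarz for the form of X together with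
  u^T X u < |u|^2 shows |u|^2 < v^T X v.\<close>

lemma posdef_mult_complement:
  assumes sym: "symmetric_on p X" and pX: "posdef p X" and pIX: "posdef p (\<lambda>i j. idm i j - X i j)"
  shows "posdef p (mmult p X (\<lambda>i j. idm i j - X i j))"
  unfolding posdef_iff_qform
proof (intro allI impI)
  fix v :: "nat \<Rightarrow> real" assume v: "\<exists>i<p. v i \<noteq> 0"
  define u where "u = (\<lambda>k. \<Sum>j<p. X k j * v j)"
  define uu where "uu = (\<Sum>k<p. u k * u k)"
  have u2: "(\<Sum>i<p. v i * X i k) = u k" if "k < p" for k
    unfolding u_def using sym that by (auto simp: symmetric_on_def mult.commute intro!: sum.cong)
  have r: "(\<Sum>j<p. (idm k j - X k j) * v j) = v k - u k" if "k < p" for k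
  proof -
    have eq: "\<And>j. idm k j * v j = (if j = k then v k else 0)" by (auto simp: idm_def)
    have "(\<Sum>j<p. (idm k j - X k j) * v j) = (\<Sum>j<p. idm k j * v j) - u k"
      unfolding u_def by (simp add: algebra_simps sum_subtractf)
    then show ?thesis using that by (simp only: eq sum.delta') simp
  qed
  have "qform p (mmult p X (\<lambda>i j. idm i j - X i j)) v v = (\<Sum>k<p. u k * (v k - u k))"
    unfolding qform_mmult by (intro sum.cong refl) (simp add: u2 r)
  also have "\<dots> = qform p X v v - uu"
  proof -
    have "qform p X v v = (\<Sum>k<p. u k * v k)" unfolding qform_alt u_def by (simp add: mult.commute)
    then show ?thesis unfolding uu_def by (simp add: algebra_simps sum_subtractf)
  qed
  finally have target: "qform p (mmult p X (\<lambda>i j. idm i j - X i j)) v v = qform p X v v - uu" .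
  have vv: "qform p X v v > 0" using posdef_qform[OF pX v] .
  have uu0: "uu \<ge> 0" unfolding uu_def by (intro sum_nonneg) auto
  show "qform p (mmult p X (\<lambda>i j. idm i j - X i j)) v v > 0"
  proof (cases "uu = 0")
    case True then show ?thesis using target vv by simp
  next
    case False
    then have uupos: "uu > 0" using uu0 by simp
    have "\<exists>k<p. u k \<noteq> 0"
    proof (rule ccontr)
      assume "\<not> ?thesis" then have "uu = 0" unfolding uu_def by auto
      then show False using False by simp
    qed
    then have "qform p (\<lambda>i j. idm i j - X i j) u u > 0" using posdef_qform[OF pIX] by blast
    then have uXu: "qform p X u u < uu" unfolding qform_sub qform_idm uu_def by simp
    have vXu: "qform p X v u = uu"
      unfolding qform_alt2 uu_def by (intro sum.cong refl) (simp add: u2)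
    have "uu\<^sup>2 \<le> qform p X v v * qform p X u u"
      using qform_cauchy_schwarz[OF sym, of v u] posdef_nonneg[OF pX] vXu by simp
    also have "\<dots> < qform p X v v * uu" using vv uXu by simp
    finally have "uu * uu < qform p X v v * uu" by (simp add: power2_eq_square)
    then have "uu < qform p X v v" using uupos by simp
    then show ?thesis using target by simp
  qed
qed

lemma abs_mult_le_sum_squares:
  fixes v :: "nat \<Rightarrow> real"
  assumes "i < p" "j < p"
  shows "\<bar>v i * v j\<bar> \<le> (\<Sum>k<p. v k * v k)"
proof -
  have a: "v i * v i \<le> (\<Sum>k<p. v k * v k)"
    using assms by (intro member_le_sum) auto
  have b: "v j * v j \<le> (\<Sum>k<p. v k * v k)"
    using assms by (intro member_le_sum) auto
  have "0 \<le> (\<bar>v i\<bar> - \<bar>v j\<bar>)\<^sup>2" by simp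
  then have "2 * (\<bar>v i\<bar> * \<bar>v j\<bar>) \<le> \<bar>v i\<bar> * \<bar>v i\<bar> + \<bar>v j\<bar> * \<bar>v j\<bar>"
    by (simp add: power2_eq_square algebra_simps)
  then have "\<bar>v i * v j\<bar> \<le> (v i * v i + v j * v j) / 2"
    by (simp add: abs_mult abs_mult_self_eq)
  then show ?thesis using a b by simp
qed

lemma posdef_half_id_perturb:
  assumes "\<bar>c\<bar> * (\<Sum>i<p. \<Sum>j<p. \<bar>Z i j\<bar>) < 1/2"
  shows "posdef p (\<lambda>i j. idm i j / 2 + c * Z i j)"
  unfolding posdef_iff_qform
proof (intro allI impI)
  fix v :: "nat \<Rightarrow> real" assume v: "\<exists>i<p. v i \<noteq> 0"
  define nv where "nv = (\<Sum>k<p. v k * v k)"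
  have nvpos: "nv > 0"
  proof -
    obtain i where "i < p" "v i \<noteq> 0" using v by auto
    then show ?thesis unfolding nv_def by (intro sum_pos2[where i=i]) (auto simp: zero_less_mult_iff)
  qed
  have "qform p (\<lambda>i j. idm i j / 2 + c * Z i j) v v = nv / 2 + c * qform p Z v v"
  proof -
    have "qform p (\<lambda>i j. idm i j / 2 + c * Z i j) v v = (\<Sum>i<p. \<Sum>j<p. (1/2) * (v i * idm i j * v j) + c * (v i * Z i j * v j))"
      unfolding qform_def by (intro sum.cong refl) (simp add: algebra_simps)
    also have "\<dots> = (1/2) * qform p idm v v + c * qform p Z v v"
      unfolding qform_def by (simp only: sum.distrib sum_distrib_left)
    finally show ?thesis by (simp add: qform_idm nv_def)
  qed
  moreover have "\<bar>qform p Z v v\<bar> \<le> (\<Sum>i<p. \<Sum>j<p. \<bar>Z i j\<bar>) * nv"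
  proof -
    have "\<bar>qform p Z v v\<bar> \<le> (\<Sum>i<p. \<Sum>j<p. \<bar>v i * Z i j * v j\<bar>)"
      unfolding qform_def by (rule order_trans[OF sum_abs]) (intro sum_mono sum_abs)
    also have "\<dots> \<le> (\<Sum>i<p. \<Sum>j<p. \<bar>Z i j\<bar> * nv)"
    proof (intro sum_mono)
      fix i j assume "i \<in> {..<p}" "j \<in> {..<p}"
      then have "\<bar>v i * v j\<bar> \<le> nv" unfolding nv_def by (intro abs_mult_le_sum_squares) auto
      then have "\<bar>Z i j\<bar> * \<bar>v i * v j\<bar> \<le> \<bar>Z i j\<bar> * nv" by (intro mult_left_mono) auto
      then show "\<bar>v i * Z i j * v j\<bar> \<le> \<bar>Z i j\<bar> * nv" by (simp add: abs_mult mult_ac)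
    qed
    also have "\<dots> = (\<Sum>i<p. \<Sum>j<p. \<bar>Z i j\<bar>) * nv" by (simp add: sum_distrib_right)
    finally show ?thesis .
  qed
  moreover have "\<bar>c * qform p Z v v\<bar> < nv / 2"
  proof -
    have "\<bar>c * qform p Z v v\<bar> \<le> \<bar>c\<bar> * ((\<Sum>i<p. \<Sum>j<p. \<bar>Z i j\<bar>) * nv)"
      unfolding abs_mult by (intro mult_left_mono calculation(2)) auto
    also have "\<dots> < 1/2 * nv" using assms nvpos by (simp only: mult.assoc[symmetric]) (rule mult_strict_right_mono)
    finally show ?thesis by simp
  qed
  ultimately show "qform p (\<lambda>i j. idm i j / 2 + c * Z i j) v v > 0" by linarith
qed

section \<open>Coordinates of symmetric matrices and affine changes of variables\<close>

lemma finite_utri[simp]: "finite (utri p)"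
proof -
  have "utri p \<subseteq> {..<p} \<times> {..<p}" unfolding utri_def by auto
  then show ?thesis by (rule finite_subset) auto
qed

definition smat_affine :: "nat \<Rightarrow> real \<Rightarrow> (nat \<times> nat \<Rightarrow> real) \<Rightarrow> (nat \<times> nat \<Rightarrow> real) \<Rightarrow> (nat \<times> nat \<Rightarrow> real)" where
  "smat_affine p t d z = restrict (\<lambda>u. z u * t + d u) (utri p)"

lemma smat_affine_measurable[measurable]: "smat_affine p t d \<in> measurable (smat_lebesgue p) (smat_lebesgue p)"
  unfolding smat_affine_def smat_lebesgue_def
  by (intro measurable_restrict) (auto intro!: borel_measurable_add borel_measurable_times measurable_component_singleton)

lemma lborel_affine_preimage:
  fixes t d :: real and A :: "real set"
  assumes t: "t > 0" and A: "A \<in> sets borel"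
  shows "ennreal t * emeasure lborel {y. y * t + d \<in> A} = emeasure lborel A"
proof -
  have "emeasure lborel A = emeasure (density (distr lborel borel (\<lambda>x. d + t * x)) (\<lambda>_. ennreal \<bar>t\<bar>)) A"
    using lborel_real_affine[of t d] t by simp
  also have "\<dots> = ennreal t * emeasure (distr lborel borel (\<lambda>x. d + t * x)) A"
    using A t by (subst emeasure_density_const) auto
  also have "emeasure (distr lborel borel (\<lambda>x. d + t * x)) A = emeasure lborel ((\<lambda>x. d + t * x) -` A \<inter> space lborel)"
    using A by (intro emeasure_distr) auto
  also have "(\<lambda>x. d + t * x) -` A \<inter> space lborel = {y. y * t + d \<in> A}"
    by (auto simp: algebra_simps)
  finally show ?thesis ..
qed

lemma smat_lebesgue_affine:
  assumes t: "t > 0"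
  shows "density (distr (smat_lebesgue p) (smat_lebesgue p) (smat_affine p t d)) (\<lambda>_. ennreal (t ^ card (utri p))) = smat_lebesgue p"
proof -
  interpret product_sigma_finite "\<lambda>_. lborel" by standard
  show ?thesis
    unfolding smat_lebesgue_def
  proof (rule PiM_eqI)
    show "finite (utri p)" by simp
    show "sets (density (distr (Pi\<^sub>M (utri p) (\<lambda>_. lborel)) (Pi\<^sub>M (utri p) (\<lambda>_. lborel)) (smat_affine p t d)) (\<lambda>_. ennreal (t ^ card (utri p))))
        = sets (Pi\<^sub>M (utri p) (\<lambda>_. lborel))" by simp
    fix A :: "nat \<times> nat \<Rightarrow> real set" assume A: "\<And>i. i \<in> utri p \<Longrightarrow> A i \<in> sets lborel"
    have box: "PiE (utri p) A \<in> sets (Pi\<^sub>M (utri p) (\<lambda>_. lborel))"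
      using A by (intro sets_PiM_I_finite) auto
    have am: "smat_affine p t d \<in> measurable (Pi\<^sub>M (utri p) (\<lambda>_. lborel)) (Pi\<^sub>M (utri p) (\<lambda>_. lborel))"
      using smat_affine_measurable[of p t d] unfolding smat_lebesgue_def .
    have pre: "smat_affine p t d -` PiE (utri p) A \<inter> space (Pi\<^sub>M (utri p) (\<lambda>_. lborel))
        = PiE (utri p) (\<lambda>u. {y. y * t + d u \<in> A u})"
      by (auto simp: smat_affine_def space_PiM PiE_iff)
    have Asets: "\<And>u. u \<in> utri p \<Longrightarrow> {y. y * t + d u \<in> A u} \<in> sets lborel"
    proof -
      fix u assume "u \<in> utri p"
      then have "A u \<in> sets borel" using A by simp
      then have "(\<lambda>y. y * t + d u) -` A u \<inter> space borel \<in> sets borel"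
        by (intro measurable_sets[of _ borel borel]) auto
      then show "{y. y * t + d u \<in> A u} \<in> sets lborel" by (simp add: vimage_def)
    qed
    have "emeasure (density (distr (Pi\<^sub>M (utri p) (\<lambda>_. lborel)) (Pi\<^sub>M (utri p) (\<lambda>_. lborel)) (smat_affine p t d)) (\<lambda>_. ennreal (t ^ card (utri p)))) (PiE (utri p) A)
      = ennreal (t ^ card (utri p)) * emeasure (Pi\<^sub>M (utri p) (\<lambda>_. lborel)) (PiE (utri p) (\<lambda>u. {y. y * t + d u \<in> A u}))"
      using box am by (simp add: emeasure_density_const emeasure_distr pre)
    also have "\<dots> = (\<Prod>u\<in>utri p. ennreal t) * (\<Prod>u\<in>utri p. emeasure lborel {y. y * t + d u \<in> A u})"
      using Asets t by (simp add: emeasure_PiM prod_ennreal ennreal_power)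
    also have "\<dots> = (\<Prod>u\<in>utri p. ennreal t * emeasure lborel {y. y * t + d u \<in> A u})"
      by (simp add: prod.distrib)
    also have "\<dots> = (\<Prod>u\<in>utri p. emeasure lborel (A u))"
      using A t by (intro prod.cong refl lborel_affine_preimage) auto
    finally show "emeasure (density (distr (Pi\<^sub>M (utri p) (\<lambda>_. lborel)) (Pi\<^sub>M (utri p) (\<lambda>_. lborel)) (smat_affine p t d)) (\<lambda>_. ennreal (t ^ card (utri p)))) (PiE (utri p) A)
      = (\<Prod>u\<in>utri p. emeasure lborel (A u))" .
  qed
qed

lemma integral_smat_affine:
  fixes g :: "(nat \<times> nat \<Rightarrow> real) \<Rightarrow> real"
  assumes t: "t > 0" and g[measurable]: "g \<in> borel_measurable (smat_lebesgue p)"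
  shows "integral\<^sup>L (smat_lebesgue p) g = t ^ card (utri p) * (\<integral>z. g (smat_affine p t d z) \<partial>smat_lebesgue p)"
proof -
  have "integral\<^sup>L (smat_lebesgue p) g
      = integral\<^sup>L (density (distr (smat_lebesgue p) (smat_lebesgue p) (smat_affine p t d)) (\<lambda>_. ennreal (t ^ card (utri p)))) g"
    using smat_lebesgue_affine[OF t, of p d] by simp
  also have "\<dots> = integral\<^sup>L (distr (smat_lebesgue p) (smat_lebesgue p) (smat_affine p t d)) (\<lambda>x. t ^ card (utri p) * g x)"
    using t by (subst integral_density) auto
  also have "\<dots> = (\<integral>z. t ^ card (utri p) * g (smat_affine p t d z) \<partial>smat_lebesgue p)"
    by (subst integral_distr) auto
  finally show ?thesis by simp
qed

section \<open>Gaussian integrals on symmetric matrices\<close>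

text \<open>tr Z^2 for the symmetric matrix Z with coordinates z; in coordinates it is the sum of the
  squared diagonal entries plus twice the squared off-diagonal entries.\<close>

definition coord_weight :: "nat \<times> nat \<Rightarrow> real" where
  "coord_weight u = (if fst u = snd u then 1 else 2)"

definition tr_sq :: "nat \<Rightarrow> (nat \<times> nat \<Rightarrow> real) \<Rightarrow> real" where
  "tr_sq p z = mtrace p (mmult p (symm z) (symm z))"

lemma utri_Suc: "utri (Suc p) = insert (p,p) ((\<lambda>i. (i,p)) ` {..<p} \<union> utri p)"
  unfolding utri_def by (auto simp: less_Suc_eq le_less)

lemma utri_Suc_disj: "(p,p) \<notin> (\<lambda>i. (i,p)) ` {..<p} \<union> utri p" "((\<lambda>i. (i,p)) ` {..<p}) \<inter> utri p = {}"
  unfolding utri_def by auto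

lemma sum_utri_Suc:
  fixes f :: "nat \<times> nat \<Rightarrow> 'b::comm_monoid_add"
  shows "(\<Sum>u\<in>utri (Suc p). f u) = f (p,p) + (\<Sum>i<p. f (i,p)) + (\<Sum>u\<in>utri p. f u)"
proof -
  have "(\<Sum>u\<in>utri (Suc p). f u) = f (p,p) + (\<Sum>u\<in>(\<lambda>i. (i,p)) ` {..<p} \<union> utri p. f u)"
    unfolding utri_Suc using utri_Suc_disj by (subst sum.insert) auto
  also have "(\<Sum>u\<in>(\<lambda>i. (i,p)) ` {..<p} \<union> utri p. f u) = (\<Sum>u\<in>(\<lambda>i. (i,p)) ` {..<p}. f u) + (\<Sum>u\<in>utri p. f u)"
    using utri_Suc_disj by (intro sum.union_disjoint) auto
  also have "(\<Sum>u\<in>(\<lambda>i. (i,p)) ` {..<p}. f u) = (\<Sum>i<p. f (i,p))"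
    by (subst sum.reindex) (auto simp: inj_on_def)
  finally show ?thesis by (simp add: add.assoc)
qed

lemma prod_utri_Suc:
  fixes f :: "nat \<times> nat \<Rightarrow> 'b::comm_monoid_mult"
  shows "(\<Prod>u\<in>utri (Suc p). f u) = f (p,p) * (\<Prod>i<p. f (i,p)) * (\<Prod>u\<in>utri p. f u)"
proof -
  have "(\<Prod>u\<in>utri (Suc p). f u) = f (p,p) * (\<Prod>u\<in>(\<lambda>i. (i,p)) ` {..<p} \<union> utri p. f u)"
    unfolding utri_Suc using utri_Suc_disj by (subst prod.insert) auto
  also have "(\<Prod>u\<in>(\<lambda>i. (i,p)) ` {..<p} \<union> utri p. f u) = (\<Prod>u\<in>(\<lambda>i. (i,p)) ` {..<p}. f u) * (\<Prod>u\<in>utri p. f u)"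
    using utri_Suc_disj by (intro prod.union_disjoint) auto
  also have "(\<Prod>u\<in>(\<lambda>i. (i,p)) ` {..<p}. f u) = (\<Prod>i<p. f (i,p))"
    by (subst prod.reindex) (auto simp: inj_on_def)
  finally show ?thesis by (simp add: mult.assoc)
qed

lemma tr_sq_eq: "tr_sq p z = (\<Sum>u\<in>utri p. coord_weight u * (z u)\<^sup>2)"
proof -
  define g where "g = (\<lambda>i k. (z (min i k, max i k))\<^sup>2)"
  have "tr_sq p z = (\<Sum>i<p. \<Sum>k<p. g i k)"
    unfolding tr_sq_def mtrace_def mmult_def symm_def g_def
    by (intro sum.cong refl) (simp add: power2_eq_square min_def max_def)
  also have "\<dots> = (\<Sum>u\<in>utri p. coord_weight u * (z u)\<^sup>2)"
  proof (induction p)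
    case 0 then show ?case by (simp add: utri_def)
  next
    case (Suc p)
    have "(\<Sum>i<Suc p. \<Sum>k<Suc p. g i k) = (\<Sum>i<p. \<Sum>k<p. g i k) + (\<Sum>i<p. g i p) + (\<Sum>k<p. g p k) + g p p"
      by (simp add: sum.distrib)
    also have "(\<Sum>i<p. g i p) = (\<Sum>i<p. (z (i,p))\<^sup>2)" by (intro sum.cong refl) (auto simp: g_def)
    also have "(\<Sum>k<p. g p k) = (\<Sum>i<p. (z (i,p))\<^sup>2)" by (intro sum.cong refl) (auto simp: g_def)
    also have "g p p = (z (p,p))\<^sup>2" by (simp add: g_def)
    finally have e: "(\<Sum>i<Suc p. \<Sum>k<Suc p. g i k) = (\<Sum>i<p. \<Sum>k<p. g i k) + (\<Sum>i<p. (z (i,p))\<^sup>2) + (\<Sum>i<p. (z (i,p))\<^sup>2) + (z (p,p))\<^sup>2" .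
    have w2: "(\<Sum>i<p. coord_weight (i,p) * (z (i,p))\<^sup>2) = (\<Sum>i<p. (z (i,p))\<^sup>2) + (\<Sum>i<p. (z (i,p))\<^sup>2)"
    proof -
      have "(\<Sum>i<p. coord_weight (i,p) * (z (i,p))\<^sup>2) = (\<Sum>i<p. (z (i,p))\<^sup>2 + (z (i,p))\<^sup>2)"
        by (intro sum.cong refl) (auto simp: coord_weight_def)
      then show ?thesis by (simp add: sum.distrib sum_distrib_left)
    qed
    show ?case unfolding e Suc.IH sum_utri_Suc[of "\<lambda>u. coord_weight u * (z u)\<^sup>2" p] w2
      by (simp add: coord_weight_def)
  qed
  finally show ?thesis .
qed

lemma gaussian_integral_1d:
  fixes c :: real assumes c: "c > 0"
  shows "integrable lborel (\<lambda>x. exp (- c * x\<^sup>2))" "(\<integral>x. exp (- c * x\<^sup>2) \<partial>lborel) = sqrt (pi / c)"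
proof -
  define \<sigma> where "\<sigma> = sqrt (1 / (2 * c))"
  have s2: "\<sigma>\<^sup>2 = 1 / (2 * c)" unfolding \<sigma>_def using c by simp
  have sp: "\<sigma> > 0" unfolding \<sigma>_def using c by simp
  have eq: "exp (- c * x\<^sup>2) = sqrt (pi / c) * normal_density 0 \<sigma> x" for x
  proof -
    have "sqrt (2 * pi * \<sigma>\<^sup>2) = sqrt (pi / c)" using s2 c by simp
    moreover have "- (x - 0)\<^sup>2 / (2 * \<sigma>\<^sup>2) = - c * x\<^sup>2" using c by (subst s2) (simp add: field_simps)
    moreover have "sqrt (pi / c) > 0" using c by simp
    ultimately show ?thesis unfolding normal_density_def using c by simp
  qed
  show "integrable lborel (\<lambda>x. exp (- c * x\<^sup>2))" unfolding eq by (simp add: integrable_normal_density[OF sp])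
  show "(\<integral>x. exp (- c * x\<^sup>2) \<partial>lborel) = sqrt (pi / c)" unfolding eq by (simp add: integral_normal_density[OF sp])
qed

lemma gaussian_integral_tr_sq:
  assumes b: "\<beta> > 0"
  shows "integrable (smat_lebesgue p) (\<lambda>z. exp (- \<beta> * tr_sq p z))"
    "(\<integral>z. exp (- \<beta> * tr_sq p z) \<partial>smat_lebesgue p) = (\<Prod>u\<in>utri p. sqrt (pi / (\<beta> * coord_weight u)))"
proof -
  interpret product_sigma_finite "\<lambda>_. lborel" by standard
  have coord_weight: "coord_weight u > 0" for u by (simp add: coord_weight_def)
  have eq: "exp (- \<beta> * tr_sq p z) = (\<Prod>u\<in>utri p. exp (- (\<beta> * coord_weight u) * (z u)\<^sup>2))" for z
    unfolding tr_sq_eq by (simp add: sum_distrib_left exp_sum[symmetric] sum_negf mult.assoc)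
  show "integrable (smat_lebesgue p) (\<lambda>z. exp (- \<beta> * tr_sq p z))"
    unfolding eq smat_lebesgue_def
    by (rule product_integrable_prod) (use b coord_weight gaussian_integral_1d in auto)
  have "(\<integral>z. exp (- \<beta> * tr_sq p z) \<partial>smat_lebesgue p) = (\<Prod>u\<in>utri p. (\<integral>x. exp (- (\<beta> * coord_weight u) * x\<^sup>2) \<partial>lborel))"
    unfolding eq smat_lebesgue_def
    by (rule product_integral_prod) (use b coord_weight gaussian_integral_1d in auto)
  also have "\<dots> = (\<Prod>u\<in>utri p. sqrt (pi / (\<beta> * coord_weight u)))"
    using b coord_weight by (intro prod.cong refl gaussian_integral_1d) auto
  finally show "(\<integral>z. exp (- \<beta> * tr_sq p z) \<partial>smat_lebesgue p) = (\<Prod>u\<in>utri p. sqrt (pi / (\<beta> * coord_weight u)))" .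
qed

text \<open>For \<beta> = 1/2 the Gaussian integral is the reciprocal of the GOE normalising constant.\<close>

lemma gaussian_constant_half:
  "(\<Prod>u\<in>utri p. sqrt (pi / (1/2 * coord_weight u))) = (2 * pi) powr (real p / 2) * pi powr (real p * (real p - 1) / 4)"
proof (induction p)
  case 0 then show ?case by (simp add: utri_def)
next
  case (Suc p)
  have a: "sqrt (pi / (1/2 * coord_weight (p,p))) = (2*pi) powr (1/2)" by (simp add: coord_weight_def powr_half_sqrt)
  have b: "(\<Prod>i<p. sqrt (pi / (1/2 * coord_weight (i,p)))) = pi powr (real p / 2)"
  proof -
    have "(\<Prod>i<p. sqrt (pi / (1/2 * coord_weight (i,p)))) = (\<Prod>i<p. pi powr (1/2))"
      by (intro prod.cong refl) (auto simp: coord_weight_def powr_half_sqrt)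
    also have "\<dots> = pi powr (real p / 2)" by (simp add: powr_realpow[symmetric] powr_powr)
    finally show ?thesis .
  qed
  have "(2 * pi) powr (real (Suc p) / 2) = (2*pi) powr (1/2) * (2 * pi) powr (real p / 2)"
    by (simp add: powr_add[symmetric] add_divide_distrib)
  moreover have "pi powr (real (Suc p) * (real (Suc p) - 1) / 4) = pi powr (real p / 2) * pi powr (real p * (real p - 1) / 4)"
    by (simp add: powr_add[symmetric] field_simps)
  ultimately show ?case unfolding prod_utri_Suc a b Suc.IH by (simp add: mult_ac)
qed

lemma tr_sq_measurable [measurable]: "tr_sq p \<in> borel_measurable (smat_lebesgue p)"
  unfolding tr_sq_eq smat_lebesgue_def by measurable

lemma tr_sq_nonneg: "tr_sq p z \<ge> 0"
  unfolding tr_sq_eq by (intro sum_nonneg) (auto simp: coord_weight_def)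

lemma gaussian_integral_pos:
  assumes "\<beta> > 0"
  shows "(\<integral>z. exp (- \<beta> * tr_sq p z) \<partial>smat_lebesgue p) > 0"
  unfolding gaussian_integral_tr_sq(2)[OF assms] using assms
  by (intro prod_pos) (auto simp: coord_weight_def)

lemma goe_integral:
  assumes [measurable]: "f \<in> borel_measurable (smat_lebesgue p)"
  shows "integral\<^sup>L (goe_measure p) f
    = (\<integral>z. exp (- (1/2) * tr_sq p z) * f z \<partial>smat_lebesgue p)
      / (\<integral>z. exp (- (1/2) * tr_sq p z) \<partial>smat_lebesgue p)"
proof -
  define P where "P = (2 * pi) powr (real p / 2) * pi powr (real p * (real p - 1) / 4)"
  have P: "(\<integral>z. exp (- (1/2) * tr_sq p z) \<partial>smat_lebesgue p) = P"
    using gaussian_integral_tr_sq(2)[of "1/2" p] gaussian_constant_half[of p] by (simp add: P_def)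
  have P_pos: "P > 0" unfolding P_def by simp
  have const: "(2 * pi) powr (- real p / 2) * pi powr (- real p * (real p - 1) / 4) * P = 1"
  proof -
    have "(2 * pi) powr (- real p / 2) * (2 * pi) powr (real p / 2) = 1"
      by (simp add: powr_add[symmetric])
    moreover have "pi powr (- real p * (real p - 1) / 4) * pi powr (real p * (real p - 1) / 4) = 1"
      by (simp add: powr_add[symmetric])
    ultimately show ?thesis unfolding P_def by (simp add: mult_ac)
  qed
  have dens: "goe_density p z = exp (- (1/2) * tr_sq p z) / P" for z
  proof -
    have "goe_density p z = ((2 * pi) powr (- real p / 2) * pi powr (- real p * (real p - 1) / 4))
        * exp (- (1/2) * tr_sq p z)"
      unfolding goe_density_def tr_sq_def by simp
    also have "(2 * pi) powr (- real p / 2) * pi powr (- real p * (real p - 1) / 4) = 1 / P"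
      using const P_pos by (simp add: eq_divide_eq)
    finally show ?thesis by simp
  qed
  have "integral\<^sup>L (goe_measure p) f = (\<integral>z. goe_density p z * f z \<partial>smat_lebesgue p)"
    unfolding goe_measure_def using P_pos
    by (subst integral_density) (auto simp: dens[abs_def])
  also have "\<dots> = (\<integral>z. exp (- (1/2) * tr_sq p z) * f z / P \<partial>smat_lebesgue p)"
    by (simp add: dens)
  also have "\<dots> = (\<integral>z. exp (- (1/2) * tr_sq p z) * f z \<partial>smat_lebesgue p) / P"
    by (rule integral_divide_zero)
  finally show ?thesis unfolding P .
qed

section \<open>The rescaled Beta kernel\<close>

definition half_id :: "nat \<times> nat \<Rightarrow> real" where "half_id u = idm (fst u) (snd u) / 2"

text \<open>The Beta_p(a,a) density at X = I/2 + cZ is, up to a constant factor, the kernel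
  det(I - 4c^2 Z^2)^(a - (p+1)/2), supported where I/2 + cZ and I/2 - cZ are positive definite.\<close>

definition beta_kernel :: "nat \<Rightarrow> real \<Rightarrow> real \<Rightarrow> (nat \<times> nat \<Rightarrow> real) \<Rightarrow> real" where
  "beta_kernel p c a z = (if posdef p (\<lambda>i j. idm i j / 2 + c * symm z i j) \<and> posdef p (\<lambda>i j. idm i j / 2 + (- c) * symm z i j)
     then mdet p (\<lambda>i j. idm i j - (4 * c\<^sup>2) * mmult p (symm z) (symm z) i j) powr (a - (real p + 1) / 2) else 0)"

lemma idm_sym: "idm i j = idm j i" by (auto simp: idm_def)

lemma idm_minmax: "idm (min i j) (max i j) = idm i j" by (auto simp: idm_def min_def max_def)

lemma symm_sym: "symmetric_on p (symm z)"
  unfolding symmetric_on_def symm_def by (simp add: min.commute max.commute)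

lemma symm_smat_affine: "i < p \<Longrightarrow> j < p \<Longrightarrow> symm (smat_affine p c half_id z) i j = idm i j / 2 + c * symm z i j"
  unfolding symm_def smat_affine_def half_id_def by (auto simp: utri_def idm_minmax)

lemma sum_idm_left: "i < p \<Longrightarrow> (\<Sum>k<p. idm i k * g k) = g i"
proof -
  assume i: "i < p"
  have "\<And>k. idm i k * g k = (if k = i then g i else 0)" by (auto simp: idm_def)
  then show ?thesis using i by (simp only:) (simp add: sum.delta')
qed

lemma sum_idm_right: "j < p \<Longrightarrow> (\<Sum>k<p. g k * idm k j) = g j"
proof -
  assume j: "j < p"
  have "\<And>k. g k * idm k j = (if k = j then g j else 0)" by (auto simp: idm_def)
  then show ?thesis using j by (simp only:) (simp add: sum.delta')
qed

lemma mmult_half_id_plus_minus: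
  assumes "i < p" "j < p"
  shows "4 * mmult p (\<lambda>i j. idm i j / 2 + c * Z i j) (\<lambda>i j. idm i j / 2 + (- c) * Z i j) i j
     = idm i j - (4 * c\<^sup>2) * mmult p Z Z i j"
proof -
  have "mmult p (\<lambda>i j. idm i j / 2 + c * Z i j) (\<lambda>i j. idm i j / 2 + (- c) * Z i j) i j
      = (\<Sum>k<p. (1/4) * (idm i k * idm k j) - (c/2) * (idm i k * Z k j) + (c/2) * (Z i k * idm k j) - c\<^sup>2 * (Z i k * Z k j))"
    unfolding mmult_def by (intro sum.cong refl) (simp add: algebra_simps power2_eq_square)
  also have "\<dots> = (1/4) * (\<Sum>k<p. idm i k * idm k j) - (c/2) * (\<Sum>k<p. idm i k * Z k j) + (c/2) * (\<Sum>k<p. Z i k * idm k j) - c\<^sup>2 * (\<Sum>k<p. Z i k * Z k j)"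
    by (simp only: sum.distrib sum_subtractf sum_distrib_left)
  also have "\<dots> = (1/4) * idm i j - c\<^sup>2 * mmult p Z Z i j"
    using assms by (simp add: sum_idm_left sum_idm_right mmult_def)
  finally show ?thesis by (simp add: algebra_simps)
qed

lemma mbeta_pos:
  assumes "a > (real p - 1) / 2" "b > (real p - 1) / 2"
  shows "mbeta p a b > 0"
proof -
  have mg: "mgamma p x > 0" if "x > (real p - 1) / 2" for x
  proof -
    have "(\<Prod>i=1..p. Gamma (x - (real i - 1) / 2)) > 0"
    proof (intro prod_pos Gamma_real_pos)
      fix i assume "i \<in> {1..p}"
      then have "real i \<le> real p" by simp
      then show "0 < x - (real i - 1) / 2" using that by (simp add: field_simps)
    qed
    then show ?thesis unfolding mgamma_def by simp
  qed
  have "mgamma p (a + b) > 0"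
  proof (cases "p = 0")
    case True then show ?thesis by (simp add: mgamma_def)
  next
    case False
    then have "real p \<ge> 1" by simp
    then show ?thesis using assms by (intro mg) (simp add: field_simps)
  qed
  moreover have "mgamma p a > 0" "mgamma p b > 0" using mg assms by auto
  ultimately
  show ?thesis unfolding mbeta_def by simp
qed

text \<open>The Beta density at I/2 + cZ is a constant multiple of the kernel, because
  det(I/2 + cZ) det(I/2 - cZ) = 4^(-p) det(I - 4c^2 Z^2).\<close>

lemma beta_density_smat_affine:
  assumes a: "a > (real p - 1) / 2"
  shows "beta_density p a a (smat_affine p c half_id z) = ((1/4)^p) powr (a - (real p + 1) / 2) / mbeta p a a * beta_kernel p c a z"
proof -
  define X where "X = (\<lambda>i j. idm i j / 2 + c * symm z i j)"
  define Y where "Y = (\<lambda>i j. idm i j / 2 + (- c) * symm z i j)"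
  define M where "M = (\<lambda>i j. idm i j - (4 * c\<^sup>2) * mmult p (symm z) (symm z) i j)"
  define \<alpha> where "\<alpha> = a - (real p + 1) / 2"
  have e1: "posdef p (symm (smat_affine p c half_id z)) = posdef p X"
    unfolding X_def by (intro posdef_cong) (simp add: symm_smat_affine)
  have e2: "posdef p (\<lambda>i j. idm i j - symm (smat_affine p c half_id z) i j) = posdef p Y"
    unfolding Y_def by (intro posdef_cong) (simp add: symm_smat_affine)
  have d1: "mdet p (symm (smat_affine p c half_id z)) = mdet p X"
    unfolding X_def by (intro mdet_cong) (simp add: symm_smat_affine)
  have d2: "mdet p (\<lambda>i j. idm i j - symm (smat_affine p c half_id z) i j) = mdet p Y"
    unfolding Y_def by (intro mdet_cong) (simp add: symm_smat_affine)
  show ?thesis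
  proof (cases "posdef p X \<and> posdef p Y")
    case False
    then show ?thesis unfolding beta_density_def beta_kernel_def e1 e2 X_def[symmetric] Y_def[symmetric] by auto
  next
    case True
    have sX: "symmetric_on p X" using symm_sym[of p z] unfolding X_def symmetric_on_def by (auto simp: idm_sym)
    have sY: "symmetric_on p Y" using symm_sym[of p z] unfolding Y_def symmetric_on_def by (auto simp: idm_sym)
    have pX: "mdet p X > 0" using hadamard_inequality[OF sX] True by auto
    have pY: "mdet p Y > 0" using hadamard_inequality[OF sY] True by auto
    have "mdet p X * mdet p Y = mdet p (mmult p X Y)" by (simp add: mdet_mult)
    also have "\<dots> = (1/4)^p * mdet p (\<lambda>i j. 4 * mmult p X Y i j)"
      by (simp add: mdet_scale power_one_over)
    also have "mdet p (\<lambda>i j. 4 * mmult p X Y i j) = mdet p M"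
      unfolding M_def X_def Y_def by (intro mdet_cong mmult_half_id_plus_minus)
    finally have XY: "mdet p X * mdet p Y = (1/4)^p * mdet p M" .
    have "(1/4)^p * mdet p M > 0" using XY pX pY by (metis mult_pos_pos)
    then have pM: "mdet p M \<ge> 0" by (simp add: zero_less_mult_iff)
    have "beta_density p a a (smat_affine p c half_id z) = mdet p X powr \<alpha> * mdet p Y powr \<alpha> / mbeta p a a"
      unfolding beta_density_def e1 e2 d1 d2 \<alpha>_def using True by simp
    also have "\<dots> = (mdet p X * mdet p Y) powr \<alpha> / mbeta p a a"
      using pX pY by (simp add: powr_mult)
    also have "\<dots> = ((1/4)^p) powr \<alpha> * mdet p M powr \<alpha> / mbeta p a a"
      unfolding XY using pM by (simp add: powr_mult)
    also have "mdet p M powr \<alpha> = beta_kernel p c a z"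
      unfolding beta_kernel_def M_def \<alpha>_def using True unfolding X_def Y_def by simp
    finally show ?thesis unfolding \<alpha>_def by simp
  qed
qed

lemma posdef_scale: "posdef p A \<Longrightarrow> r > 0 \<Longrightarrow> posdef p (\<lambda>i j. r * A i j)"
proof -
  assume a: "posdef p A" "r > 0"
  have "\<And>v. (\<Sum>i<p. \<Sum>j<p. v i * (r * A i j) * v j) = r * (\<Sum>i<p. \<Sum>j<p. v i * A i j * v j)"
    by (simp add: sum_distrib_left mult_ac)
  then show ?thesis using a unfolding posdef_def by simp
qed

lemma mmult_sym: "symmetric_on p Z \<Longrightarrow> symmetric_on p (mmult p Z Z)"
  unfolding symmetric_on_def mmult_def by (auto intro!: sum.cong simp: mult.commute)

lemma beta_kernel_nonneg: "beta_kernel p c a z \<ge> 0"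
  unfolding beta_kernel_def by auto

text \<open>On the support of the kernel, I - 4c^2 Z^2 = 4(I/2 + cZ)(I/2 - cZ) is positive definite.\<close>

lemma beta_kernel_support_posdef:
  assumes "posdef p (\<lambda>i j. idm i j / 2 + c * symm z i j)" "posdef p (\<lambda>i j. idm i j / 2 + (- c) * symm z i j)"
  defines "M \<equiv> (\<lambda>i j. idm i j - (4 * c\<^sup>2) * mmult p (symm z) (symm z) i j)"
  shows "posdef p M" "symmetric_on p M"
proof -
  define X where "X = (\<lambda>i j. idm i j / 2 + c * symm z i j)"
  have sX: "symmetric_on p X" using symm_sym[of p z] unfolding X_def symmetric_on_def by (auto simp: idm_sym)
  have pY: "posdef p (\<lambda>i j. idm i j - X i j)"
    using assms(2) unfolding X_def by (subst posdef_cong[where B="\<lambda>i j. idm i j / 2 + (- c) * symm z i j"]) auto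
  have "posdef p (mmult p X (\<lambda>i j. idm i j - X i j))"
    using posdef_mult_complement[OF sX assms(1)[folded X_def] pY] .
  then have "posdef p (\<lambda>i j. 4 * mmult p X (\<lambda>i j. idm i j - X i j) i j)" by (rule posdef_scale) simp
  moreover have "mmult p X (\<lambda>i j. idm i j - X i j) i j = mmult p (\<lambda>i j. idm i j / 2 + c * symm z i j) (\<lambda>i j. idm i j / 2 + (- c) * symm z i j) i j" for i j
    unfolding X_def mmult_def by (intro sum.cong refl) (simp add: algebra_simps)
  ultimately have "posdef p (\<lambda>i j. 4 * mmult p (\<lambda>i j. idm i j / 2 + c * symm z i j) (\<lambda>i j. idm i j / 2 + (- c) * symm z i j) i j)"
    by simp
  then show "posdef p M" unfolding M_def by (subst posdef_cong[OF mmult_half_id_plus_minus[symmetric]]) auto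
  show "symmetric_on p M"
    using mmult_sym[OF symm_sym[of p z]] unfolding M_def symmetric_on_def by (auto simp: idm_sym)
qed

text \<open>Gaussian domination: by Hadamard's inequality and 1 - x \<le> exp(-x),
  det(I - eZ^2) \<le> exp(-e tr Z^2), so the kernel is at most exp(-tr Z^2 / 4)
  once (a - (p+1)/2) 4c^2 \<ge> 1/4.\<close>

lemma beta_kernel_le_gaussian:
  assumes al: "a - (real p + 1) / 2 \<ge> 0" and ae: "(a - (real p + 1) / 2) * (4 * c\<^sup>2) \<ge> 1/4"
  shows "beta_kernel p c a z \<le> exp (- (1/4) * tr_sq p z)"
proof (cases "posdef p (\<lambda>i j. idm i j / 2 + c * symm z i j) \<and> posdef p (\<lambda>i j. idm i j / 2 + (- c) * symm z i j)")
  case False then show ?thesis unfolding beta_kernel_def by auto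
next
  case True
  define M where "M = (\<lambda>i j. idm i j - (4 * c\<^sup>2) * mmult p (symm z) (symm z) i j)"
  define \<alpha> where "\<alpha> = a - (real p + 1) / 2"
  define e where "e = 4 * c\<^sup>2"
  have pM: "posdef p M" and sM: "symmetric_on p M" using beta_kernel_support_posdef True unfolding M_def by auto
  have had: "0 < mdet p M" "mdet p M \<le> (\<Prod>i<p. M i i)" using hadamard_inequality[OF sM pM] by auto
  have "(\<Prod>i<p. M i i) \<le> (\<Prod>i<p. exp (- e * mmult p (symm z) (symm z) i i))"
  proof (rule prod_mono)
    fix i assume "i \<in> {..<p}"
    then have "M i i > 0" using posdef_diag[OF pM] by auto
    moreover have "M i i \<le> exp (- e * mmult p (symm z) (symm z) i i)"
      unfolding M_def e_def idm_def using exp_ge_add_one_self[of "- (4 * c\<^sup>2) * mmult p (symm z) (symm z) i i"] by simp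
    ultimately show "0 \<le> M i i \<and> M i i \<le> exp (- e * mmult p (symm z) (symm z) i i)" by simp
  qed
  also have "\<dots> = exp (- e * tr_sq p z)"
    unfolding tr_sq_def mtrace_def by (simp add: exp_sum[symmetric] sum_distrib_left sum_negf)
  finally have dM: "mdet p M \<le> exp (- e * tr_sq p z)" using had by simp
  have "beta_kernel p c a z = mdet p M powr \<alpha>" unfolding beta_kernel_def M_def \<alpha>_def using True by simp
  also have "\<dots> \<le> exp (- e * tr_sq p z) powr \<alpha>"
    using had dM al unfolding \<alpha>_def by (intro powr_mono2) auto
  also have "\<dots> = exp (- (\<alpha> * e) * tr_sq p z)" by (simp add: powr_def algebra_simps)
  also have "\<dots> \<le> exp (- (1/4) * tr_sq p z)"
    using ae tr_sq_nonneg[of p z] unfolding \<alpha>_def e_def by (intro exp_mono mult_right_mono) auto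
  finally show ?thesis .
qed

lemma ln_mdet_id_minus_tendsto:
  assumes e_at: "filterlim e (at 0) sequentially"
  shows "eventually (\<lambda>n. mdet p (\<lambda>i j. idm i j - e n * B i j) > 0) sequentially"
    and "(\<lambda>n. ln (mdet p (\<lambda>i j. idm i j - e n * B i j)) / e n) \<longlonglongrightarrow> - mtrace p B"
proof -
  define \<phi> where "\<phi> = (\<lambda>e. mdet p (\<lambda>i j. idm i j - e * B i j))"
  have \<phi>0: "\<phi> 0 = 1" unfolding \<phi>_def using mdet_idm[of p] by (simp add: fun_eq_iff)
  have D: "(\<phi> has_field_derivative (- mtrace p B)) (at 0)"
    unfolding \<phi>_def by (rule mdet_id_minus_deriv)
  have e0: "e \<longlonglongrightarrow> 0" using e_at by (simp add: filterlim_at)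
  have "(\<lambda>n. \<phi> (e n)) \<longlonglongrightarrow> 1"
    using isCont_tendsto_compose[OF DERIV_isCont[OF D] e0] \<phi>0 by simp
  then have "eventually (\<lambda>n. \<phi> (e n) > 0) sequentially"
    by (rule order_tendstoD(1)) simp
  then show "eventually (\<lambda>n. mdet p (\<lambda>i j. idm i j - e n * B i j) > 0) sequentially"
    unfolding \<phi>_def .
  have "((\<lambda>x. ln (\<phi> x)) has_field_derivative (1 / \<phi> 0) * (- mtrace p B)) (at 0)"
    using DERIV_chain2[OF DERIV_ln_divide D] \<phi>0 by simp
  then have "((\<lambda>h. (ln (\<phi> (0 + h)) - ln (\<phi> 0)) / h) \<longlongrightarrow> - mtrace p B) (at 0)"
    using \<phi>0 unfolding DERIV_def by simp
  then have "((\<lambda>h. ln (\<phi> h) / h) \<longlongrightarrow> - mtrace p B) (at 0)" using \<phi>0 by simp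
  from filterlim_compose[OF this e_at]
  show "(\<lambda>n. ln (mdet p (\<lambda>i j. idm i j - e n * B i j)) / e n) \<longlonglongrightarrow> - mtrace p B"
    unfolding \<phi>_def .
qed

text \<open>Pointwise limit: with e = 4c^2 \<rightarrow> 0 and (a - (p+1)/2) e \<rightarrow> 1/2, the kernel
  det(I - eZ^2)^(a - (p+1)/2) = exp((a - (p+1)/2) e * ln det(I - eZ^2) / e) tends to
  exp(-tr Z^2 / 2); for small c the point Z lies in the support of the kernel.\<close>

lemma beta_kernel_tendsto:
  fixes c a :: "nat \<Rightarrow> real"
  assumes c0: "c \<longlonglongrightarrow> 0" and cnz: "eventually (\<lambda>n. c n \<noteq> 0) sequentially"
    and lim: "(\<lambda>n. (a n - (real p + 1) / 2) * (4 * (c n)\<^sup>2)) \<longlonglongrightarrow> 1/2"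
  shows "(\<lambda>n. beta_kernel p (c n) (a n) z) \<longlonglongrightarrow> exp (- (1/2) * tr_sq p z)"
proof -
  define B where "B = mmult p (symm z) (symm z)"
  define \<phi> where "\<phi> = (\<lambda>e. mdet p (\<lambda>i j. idm i j - e * B i j))"
  define e where "e = (\<lambda>n. 4 * (c n)\<^sup>2)"
  define k where "k = (real p + 1) / 2"
  have "e \<longlonglongrightarrow> 0" unfolding e_def using tendsto_mult[OF tendsto_const tendsto_power[OF c0, of 2], of 4] by simp
  moreover have ez: "eventually (\<lambda>n. e n \<noteq> 0) sequentially"
    using cnz unfolding e_def by (auto elim: eventually_mono)
  ultimately have e_at: "filterlim e (at 0) sequentially" by (rule filterlim_atI)
  have "(\<lambda>n. ((a n - k) * e n) * (ln (\<phi> (e n)) / e n)) \<longlonglongrightarrow> 1/2 * (- tr_sq p z)"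
    using tendsto_mult[OF lim ln_mdet_id_minus_tendsto(2)[OF e_at, of p B]]
    unfolding e_def k_def \<phi>_def B_def tr_sq_def .
  then have L: "(\<lambda>n. exp (((a n - k) * e n) * (ln (\<phi> (e n)) / e n))) \<longlonglongrightarrow> exp (- (1/2) * tr_sq p z)"
    using tendsto_exp by fastforce
  have "(\<lambda>n. \<bar>c n\<bar> * (\<Sum>i<p. \<Sum>j<p. \<bar>symm z i j\<bar>)) \<longlonglongrightarrow> 0"
    using tendsto_mult[OF tendsto_rabs[OF c0] tendsto_const] by simp
  then have small: "eventually (\<lambda>n. \<bar>c n\<bar> * (\<Sum>i<p. \<Sum>j<p. \<bar>symm z i j\<bar>) < 1/2) sequentially"
    by (rule order_tendstoD(2)) simp
  have "eventually (\<lambda>n. exp (((a n - k) * e n) * (ln (\<phi> (e n)) / e n)) = beta_kernel p (c n) (a n) z) sequentially"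
    using small ln_mdet_id_minus_tendsto(1)[OF e_at, of p B] ez
  proof eventually_elim
    case (elim n)
    have "posdef p (\<lambda>i j. idm i j / 2 + c n * symm z i j)"
      and "posdef p (\<lambda>i j. idm i j / 2 + (- c n) * symm z i j)"
      using elim(1) by (intro posdef_half_id_perturb; simp)+
    then have "beta_kernel p (c n) (a n) z = \<phi> (e n) powr (a n - k)"
      unfolding beta_kernel_def \<phi>_def e_def B_def k_def by simp
    also have "\<dots> = exp ((a n - k) * ln (\<phi> (e n)))" using elim(2) by (simp add: powr_def \<phi>_def)
    also have "(a n - k) * ln (\<phi> (e n)) = ((a n - k) * e n) * (ln (\<phi> (e n)) / e n)" using elim(3) by simp
    finally show ?case by simp
  qed
  then show ?thesis by (rule Lim_transform_eventually[OF L])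
qed

section \<open>Convergence of kernel integrals\<close>

lemma integral_dominated_convergence_eventually:
  fixes s :: "nat \<Rightarrow> 'a \<Rightarrow> real"
  assumes "f \<in> borel_measurable M" "\<And>i. s i \<in> borel_measurable M" "integrable M w"
    and lim: "\<And>x. x \<in> space M \<Longrightarrow> (\<lambda>i. s i x) \<longlonglongrightarrow> f x"
    and bd: "eventually (\<lambda>i. \<forall>x\<in>space M. \<bar>s i x\<bar> \<le> w x) sequentially"
  shows "(\<lambda>i. integral\<^sup>L M (s i)) \<longlonglongrightarrow> integral\<^sup>L M f"
proof -
  obtain N where N: "\<And>i. i \<ge> N \<Longrightarrow> \<forall>x\<in>space M. \<bar>s i x\<bar> \<le> w x"
    using bd by (auto simp: eventually_sequentially)
  have "(\<lambda>i. integral\<^sup>L M (s (i + N))) \<longlonglongrightarrow> integral\<^sup>L M f"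
  proof (rule integral_dominated_convergence[where w=w])
    show "AE x in M. (\<lambda>i. s (i + N) x) \<longlonglongrightarrow> f x"
      using lim by (intro AE_I2 LIMSEQ_ignore_initial_segment) auto
    show "AE x in M. norm (s (i + N) x) \<le> w x" for i
      using N[of "i + N"] by (intro AE_I2) auto
  qed (use assms in auto)
  then show ?thesis by (rule LIMSEQ_offset)
qed

lemma beta_kernel_dominated_eventually:
  fixes c a :: "nat \<Rightarrow> real"
  assumes lim: "(\<lambda>n. (a n - (real p + 1) / 2) * (4 * (c n)\<^sup>2)) \<longlonglongrightarrow> 1/2"
  shows "eventually (\<lambda>n. \<forall>z. beta_kernel p (c n) (a n) z \<le> exp (- (1/4) * tr_sq p z)) sequentially"
proof -
  have "eventually (\<lambda>n. 1/4 < (a n - (real p + 1) / 2) * (4 * (c n)\<^sup>2)) sequentially"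
    using order_tendstoD(1)[OF lim, of "1/4"] by linarith
  then show ?thesis
  proof eventually_elim
    case (elim n)
    have "0 \<le> a n - (real p + 1) / 2"
    proof (rule ccontr)
      assume "\<not> ?thesis"
      then have "(a n - (real p + 1) / 2) * (4 * (c n)\<^sup>2) \<le> 0" by (intro mult_nonpos_nonneg) auto
      then show False using elim by (simp add: mult.commute)
    qed
    then show ?case using elim by (intro allI beta_kernel_le_gaussian) auto
  qed
qed

lemma beta_kernel_integral_tendsto:
  fixes c a :: "nat \<Rightarrow> real" and g :: "(nat \<times> nat \<Rightarrow> real) \<Rightarrow> real"
  assumes c0: "c \<longlonglongrightarrow> 0" and cnz: "eventually (\<lambda>n. c n \<noteq> 0) sequentially"
    and lim: "(\<lambda>n. (a n - (real p + 1) / 2) * (4 * (c n)\<^sup>2)) \<longlonglongrightarrow> 1/2"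
    and meas: "\<And>n. beta_kernel p (c n) (a n) \<in> borel_measurable (smat_lebesgue p)"
    and g [measurable]: "g \<in> borel_measurable (smat_lebesgue p)"
    and growth: "\<And>z. z \<in> space (smat_lebesgue p) \<Longrightarrow> \<bar>g z\<bar> \<le> B * (1 + tr_sq p z)"
  shows "(\<lambda>n. \<integral>z. beta_kernel p (c n) (a n) z * g z \<partial>smat_lebesgue p)
    \<longlonglongrightarrow> (\<integral>z. exp (- (1/2) * tr_sq p z) * g z \<partial>smat_lebesgue p)"
proof (rule integral_dominated_convergence_eventually[where w="\<lambda>z. 8 * \<bar>B\<bar> * exp (- (1/8) * tr_sq p z)"])
  show "integrable (smat_lebesgue p) (\<lambda>z. 8 * \<bar>B\<bar> * exp (- (1/8) * tr_sq p z))"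
    using gaussian_integral_tr_sq(1)[of "1/8" p] by simp
  show "(\<lambda>n. beta_kernel p (c n) (a n) z * g z) \<longlonglongrightarrow> exp (- (1/2) * tr_sq p z) * g z" for z
    by (intro tendsto_mult tendsto_const beta_kernel_tendsto c0 cnz lim)
  have decay: "exp (- (1/4) * t) * (1 + t) \<le> 8 * exp (- (1/8) * t)" if "t \<ge> 0" for t :: real
  proof -
    have "1 + t \<le> 8 * exp (t / 8)" using exp_ge_add_one_self[of "t/8"] that by linarith
    then have "exp (- (1/4) * t) * (1 + t) \<le> exp (- (1/4) * t) * (8 * exp (t / 8))" by simp
    also have "\<dots> = 8 * exp (- (1/8) * t)" by (simp add: exp_add[symmetric])
    finally show ?thesis .
  qed
  show "eventually (\<lambda>n. \<forall>z\<in>space (smat_lebesgue p).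
      \<bar>beta_kernel p (c n) (a n) z * g z\<bar> \<le> 8 * \<bar>B\<bar> * exp (- (1/8) * tr_sq p z)) sequentially"
    using beta_kernel_dominated_eventually[OF lim]
  proof eventually_elim
    case (elim n)
    show ?case
    proof
      fix z assume z: "z \<in> space (smat_lebesgue p)"
      have t: "tr_sq p z \<ge> 0" by (rule tr_sq_nonneg)
      have "\<bar>g z\<bar> \<le> \<bar>B\<bar> * (1 + tr_sq p z)"
        using growth[OF z] mult_right_mono[OF abs_ge_self[of B], of "1 + tr_sq p z"] t by linarith
      then have "\<bar>beta_kernel p (c n) (a n) z * g z\<bar> \<le> exp (- (1/4) * tr_sq p z) * (\<bar>B\<bar> * (1 + tr_sq p z))"
        using elim beta_kernel_nonneg[of p "c n" "a n" z] unfolding abs_mult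
        by (intro mult_mono) auto
      also have "\<dots> \<le> \<bar>B\<bar> * (8 * exp (- (1/8) * tr_sq p z))"
        using decay[OF t] by (simp add: mult_left_mono mult.left_commute)
      finally show "\<bar>beta_kernel p (c n) (a n) z * g z\<bar> \<le> 8 * \<bar>B\<bar> * exp (- (1/8) * tr_sq p z)"
        by (simp add: mult_ac)
    qed
  qed
qed (use meas in auto)

section \<open>Expectations under Beta_p(a,a) as ratios of kernel integrals\<close>

lemma beta_density_nonneg:
  assumes "a > (real p - 1) / 2"
  shows "beta_density p a a x \<ge> 0"
  unfolding beta_density_def using mbeta_pos[OF assms assms] by auto

lemma beta_density_measurable:
  assumes "a > (real p - 1) / 2"
    and "distributed M (smat_lebesgue p) X (\<lambda>x. ennreal (beta_density p a a x))"
  shows "beta_density p a a \<in> borel_measurable (smat_lebesgue p)"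
  using distributed_real_measurable[OF _ assms(2)] beta_density_nonneg[OF assms(1)] by blast

lemma beta_kernel_measurable:
  assumes a: "a > (real p - 1) / 2"
    and X: "distributed M (smat_lebesgue p) X (\<lambda>x. ennreal (beta_density p a a x))"
  shows "beta_kernel p c a \<in> borel_measurable (smat_lebesgue p)"
proof -
  define K where "K = ((1/4)^p) powr (a - (real p + 1) / 2) / mbeta p a a"
  have "K > 0" unfolding K_def using mbeta_pos[OF a a] by simp
  moreover have "beta_density p a a (smat_affine p c half_id z) = K * beta_kernel p c a z" for z
    using beta_density_smat_affine[OF a] by (simp add: K_def)
  ultimately have "beta_kernel p c a = (\<lambda>z. beta_density p a a (smat_affine p c half_id z) / K)"
    by (simp add: fun_eq_iff)
  moreover have "(\<lambda>z. beta_density p a a (smat_affine p c half_id z)) \<in> borel_measurable (smat_lebesgue p)"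
    using measurable_compose[OF smat_affine_measurable beta_density_measurable[OF a X]] .
  ultimately show ?thesis by simp
qed

text \<open>Substituting X = I/2 + cZ: the Jacobian and the normalising constant of the density cancel
  against the total mass, leaving E g(X) = (\<integral> kernel(Z) g(I/2 + cZ) dZ) / (\<integral> kernel(Z) dZ).\<close>

lemma beta_expectation_rescaled:
  fixes M :: "'a measure" and X :: "'a \<Rightarrow> (nat \<times> nat \<Rightarrow> real)"
  assumes M: "prob_space M" and a: "a > (real p - 1) / 2" and c: "c > 0"
    and X: "distributed M (smat_lebesgue p) X (\<lambda>x. ennreal (beta_density p a a x))"
    and g [measurable]: "g \<in> borel_measurable (smat_lebesgue p)"
  shows "(\<integral>\<omega>. g (X \<omega>) \<partial>M)
    = (\<integral>z. beta_kernel p c a z * g (smat_affine p c half_id z) \<partial>smat_lebesgue p)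
      / (\<integral>z. beta_kernel p c a z \<partial>smat_lebesgue p)"
proof -
  define K where "K = ((1/4)^p) powr (a - (real p + 1) / 2) / mbeta p a a"
  define J where "J = c ^ card (utri p) * K"
  note dens_meas [measurable] = beta_density_measurable[OF a X]
  have expect: "(\<integral>\<omega>. h (X \<omega>) \<partial>M)
      = J * (\<integral>z. beta_kernel p c a z * h (smat_affine p c half_id z) \<partial>smat_lebesgue p)"
    if [measurable]: "h \<in> borel_measurable (smat_lebesgue p)" for h
  proof -
    have "(\<integral>\<omega>. h (X \<omega>) \<partial>M) = (\<integral>x. beta_density p a a x * h x \<partial>smat_lebesgue p)"
      using distributed_integral[OF X, of h] beta_density_nonneg[OF a] by simp
    also have "\<dots> = c ^ card (utri p) * (\<integral>z. beta_density p a a (smat_affine p c half_id z)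
        * h (smat_affine p c half_id z) \<partial>smat_lebesgue p)"
      by (rule integral_smat_affine[OF c]) measurable
    also have "\<dots> = J * (\<integral>z. beta_kernel p c a z * h (smat_affine p c half_id z) \<partial>smat_lebesgue p)"
      by (simp add: beta_density_smat_affine[OF a] J_def K_def mult.assoc)
    finally show ?thesis .
  qed
  have "J * (\<integral>z. beta_kernel p c a z \<partial>smat_lebesgue p) = 1"
    using expect[of "\<lambda>_. 1"] prob_space.prob_space[OF M] by simp
  then have "J = 1 / (\<integral>z. beta_kernel p c a z \<partial>smat_lebesgue p)"
    by (metis divide_eq_eq mult_zero_right zero_neq_one)
  then show ?thesis using expect[OF g] by simp
qed

definition rescale :: "nat \<Rightarrow> real \<Rightarrow> (nat \<times> nat \<Rightarrow> real) \<Rightarrow> (nat \<times> nat \<Rightarrow> real)" where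
  "rescale p s x = restrict (\<lambda>(i, j). s * (x (i, j) - idm i j / 2)) (utri p)"

lemma rescale_measurable [measurable]:
  "rescale p s \<in> measurable (smat_lebesgue p) (smat_lebesgue p)"
proof -
  have "rescale p s = smat_affine p s (\<lambda>u. - s * half_id u)"
    by (auto simp: fun_eq_iff rescale_def smat_affine_def half_id_def algebra_simps)
  then show ?thesis by simp
qed

lemma rescale_smat_affine:
  assumes "s * c = 1" "z \<in> space (smat_lebesgue p)"
  shows "rescale p s (smat_affine p c half_id z) = z"
proof -
  have "z \<in> PiE (utri p) (\<lambda>_. UNIV)" using assms(2) by (simp add: smat_lebesgue_def space_PiM)
  then show ?thesis using assms(1)
    by (auto simp: fun_eq_iff rescale_def smat_affine_def half_id_def PiE_def extensional_def algebra_simps)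
qed

lemma frob_norm_sq_centred:
  "(frob_norm p (\<lambda>i j. symm x i j - idm i j / 2))\<^sup>2 = tr_sq p (\<lambda>u. x u - half_id u)"
proof -
  have "symm (\<lambda>u. x u - half_id u) = (\<lambda>i j. symm x i j - idm i j / 2)"
    unfolding symm_def half_id_def by (auto simp: fun_eq_iff idm_minmax)
  then show ?thesis
    using tr_sq_nonneg[of p "\<lambda>u. x u - half_id u"] unfolding frob_norm_def tr_sq_def by simp
qed

lemma tr_sq_centred_measurable [measurable]:
  "(\<lambda>x. tr_sq p (\<lambda>u. x u - half_id u)) \<in> borel_measurable (smat_lebesgue p)"
  unfolding tr_sq_eq smat_lebesgue_def by measurable

lemma tr_sq_smat_affine: "tr_sq p (\<lambda>u. smat_affine p c half_id z u - half_id u) = c\<^sup>2 * tr_sq p z"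
  unfolding tr_sq_eq smat_affine_def by (simp add: sum_distrib_left power_mult_distrib mult_ac)

lemma beta_frobenius_sq_expectation:
  fixes M :: "'a measure" and X :: "'a \<Rightarrow> (nat \<times> nat \<Rightarrow> real)"
  assumes M: "prob_space M" and a: "a > (real p - 1) / 2" and c: "c > 0"
    and X: "distributed M (smat_lebesgue p) X (\<lambda>x. ennreal (beta_density p a a x))"
  shows "(\<integral>\<omega>. (frob_norm p (\<lambda>i j. symm (X \<omega>) i j - idm i j / 2)) ^ 2 \<partial>M)
    = c\<^sup>2 * (\<integral>z. beta_kernel p c a z * tr_sq p z \<partial>smat_lebesgue p)
      / (\<integral>z. beta_kernel p c a z \<partial>smat_lebesgue p)"
proof -
  have "(\<integral>\<omega>. (frob_norm p (\<lambda>i j. symm (X \<omega>) i j - idm i j / 2)) ^ 2 \<partial>M)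
      = (\<integral>\<omega>. tr_sq p (\<lambda>u. X \<omega> u - half_id u) \<partial>M)"
    by (simp add: frob_norm_sq_centred)
  also have "\<dots> = (\<integral>z. beta_kernel p c a z * tr_sq p (\<lambda>u. smat_affine p c half_id z u - half_id u)
      \<partial>smat_lebesgue p) / (\<integral>z. beta_kernel p c a z \<partial>smat_lebesgue p)"
    by (rule beta_expectation_rescaled[OF M a c X]) measurable
  also have "\<dots> = c\<^sup>2 * (\<integral>z. beta_kernel p c a z * tr_sq p z \<partial>smat_lebesgue p)
      / (\<integral>z. beta_kernel p c a z \<partial>smat_lebesgue p)"
    unfolding tr_sq_smat_affine by (simp add: mult.left_commute[of "beta_kernel p c a _"])
  finally show ?thesis .
qed

lemma beta_rescaled_distr_integral:
  fixes M :: "'a measure" and X :: "'a \<Rightarrow> (nat \<times> nat \<Rightarrow> real)"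
  assumes M: "prob_space M" and a: "a > (real p - 1) / 2" and s: "s > 0"
    and X: "distributed M (smat_lebesgue p) X (\<lambda>x. ennreal (beta_density p a a x))"
    and f [measurable]: "f \<in> borel_measurable (smat_lebesgue p)"
  shows "integral\<^sup>L (distr M (smat_lebesgue p) (\<lambda>\<omega>. rescale p s (X \<omega>))) f
    = (\<integral>z. beta_kernel p (1 / s) a z * f z \<partial>smat_lebesgue p)
      / (\<integral>z. beta_kernel p (1 / s) a z \<partial>smat_lebesgue p)"
proof -
  have c: "1 / s > 0" using s by simp
  have "integral\<^sup>L (distr M (smat_lebesgue p) (\<lambda>\<omega>. rescale p s (X \<omega>))) f
      = (\<integral>\<omega>. f (rescale p s (X \<omega>)) \<partial>M)"
    using X by (subst integral_distr) (auto simp: distributed_def)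
  also have "\<dots> = (\<integral>z. beta_kernel p (1 / s) a z * f (rescale p s (smat_affine p (1 / s) half_id z))
      \<partial>smat_lebesgue p) / (\<integral>z. beta_kernel p (1 / s) a z \<partial>smat_lebesgue p)"
    by (rule beta_expectation_rescaled[OF M a c X]) measurable
  also have "\<dots> = (\<integral>z. beta_kernel p (1 / s) a z * f z \<partial>smat_lebesgue p)
      / (\<integral>z. beta_kernel p (1 / s) a z \<partial>smat_lebesgue p)"
    using s by (intro arg_cong2[where f="(/)"] Bochner_Integration.integral_cong refl)
      (simp add: rescale_smat_affine)
  finally show ?thesis .
qed

text \<open>The frame of the theorem: with c_n = 1/sqrt(8\<gamma>n) we have c_n \<rightarrow> 0 and
  (a_n - k) 4c_n^2 = (a_n/n - k/n)/(2\<gamma>) \<rightarrow> 1/2.\<close>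

lemma beta_scaling_limits:
  fixes a :: "nat \<Rightarrow> real"
  assumes \<gamma>: "\<gamma> > 0" and lim: "(\<lambda>n. a n / real n) \<longlonglongrightarrow> \<gamma>"
  defines "c \<equiv> \<lambda>n. 1 / sqrt (8 * \<gamma> * real n)"
  shows "c \<longlonglongrightarrow> 0" and "eventually (\<lambda>n. c n \<noteq> 0) sequentially"
    and "(\<lambda>n. (a n - k) * (4 * (c n)\<^sup>2)) \<longlonglongrightarrow> 1/2"
proof -
  have "c = (\<lambda>n. sqrt ((1 / (8 * \<gamma>)) / real n))"
    unfolding c_def by (simp add: fun_eq_iff real_sqrt_divide)
  moreover have "(\<lambda>n. sqrt ((1 / (8 * \<gamma>)) / real n)) \<longlonglongrightarrow> sqrt 0"
    by (intro tendsto_real_sqrt lim_const_over_n)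
  ultimately show "c \<longlonglongrightarrow> 0" by simp
  show "eventually (\<lambda>n. c n \<noteq> 0) sequentially"
    using eventually_gt_at_top[of "0::nat"] by eventually_elim (use \<gamma> in \<open>simp add: c_def\<close>)
  have "(\<lambda>n. (a n / real n) / (2 * \<gamma>) - (k / (2 * \<gamma>)) / real n) \<longlonglongrightarrow> \<gamma> / (2 * \<gamma>) - 0"
    by (intro tendsto_diff tendsto_divide lim tendsto_const lim_const_over_n) (use \<gamma> in auto)
  then have L: "(\<lambda>n. (a n / real n) / (2 * \<gamma>) - (k / (2 * \<gamma>)) / real n) \<longlonglongrightarrow> 1/2"
    using \<gamma> by simp
  have "eventually (\<lambda>n. (a n / real n) / (2 * \<gamma>) - (k / (2 * \<gamma>)) / real n
      = (a n - k) * (4 * (c n)\<^sup>2)) sequentially"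
    using eventually_gt_at_top[of "0::nat"]
    by eventually_elim (use \<gamma> in \<open>simp add: c_def power_divide field_simps\<close>)
  then show "(\<lambda>n. (a n - k) * (4 * (c n)\<^sup>2)) \<longlonglongrightarrow> 1/2"
    by (rule Lim_transform_eventually[OF L])
qed

lemma rescaled_beta_kernel_integral_tendsto:
  fixes M :: "'a measure" and a :: "nat \<Rightarrow> real" and X :: "nat \<Rightarrow> 'a \<Rightarrow> (nat \<times> nat \<Rightarrow> real)"
  assumes a: "\<And>n. a n > (real p - 1) / 2" and \<gamma>: "\<gamma> > 0"
    and lim: "(\<lambda>n. a n / real n) \<longlonglongrightarrow> \<gamma>"
    and X: "\<And>n. distributed M (smat_lebesgue p) (X n) (\<lambda>x. ennreal (beta_density p (a n) (a n) x))"
    and g: "g \<in> borel_measurable (smat_lebesgue p)"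
    and growth: "\<And>z. z \<in> space (smat_lebesgue p) \<Longrightarrow> \<bar>g z\<bar> \<le> B * (1 + tr_sq p z)"
  shows "(\<lambda>n. \<integral>z. beta_kernel p (1 / sqrt (8 * \<gamma> * real n)) (a n) z * g z \<partial>smat_lebesgue p)
    \<longlonglongrightarrow> (\<integral>z. exp (- (1/2) * tr_sq p z) * g z \<partial>smat_lebesgue p)"
  by (rule beta_kernel_integral_tendsto[OF beta_scaling_limits[OF \<gamma> lim]
        beta_kernel_measurable[OF a X] g growth])

lemma beta_frobenius_L2:
  fixes M :: "'a measure" and a :: "nat \<Rightarrow> real" and X :: "nat \<Rightarrow> 'a \<Rightarrow> (nat \<times> nat \<Rightarrow> real)"
  assumes M: "prob_space M" and a: "\<And>n. a n > (real p - 1) / 2" and \<gamma>: "\<gamma> > 0"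
    and lim: "(\<lambda>n. a n / real n) \<longlonglongrightarrow> \<gamma>"
    and X: "\<And>n. distributed M (smat_lebesgue p) (X n) (\<lambda>x. ennreal (beta_density p (a n) (a n) x))"
  shows "(\<lambda>n. \<integral>\<omega>. (frob_norm p (\<lambda>i j. symm (X n \<omega>) i j - idm i j / 2)) ^ 2 \<partial>M) \<longlonglongrightarrow> 0"
proof -
  define c where "c n = 1 / sqrt (8 * \<gamma> * real n)" for n
  define H where "H n = beta_kernel p (c n) (a n)" for n
  have "(\<lambda>n. \<integral>z. H n z * tr_sq p z \<partial>smat_lebesgue p)
      \<longlonglongrightarrow> (\<integral>z. exp (- (1/2) * tr_sq p z) * tr_sq p z \<partial>smat_lebesgue p)"
    unfolding H_def c_def using tr_sq_nonneg
    by (intro rescaled_beta_kernel_integral_tendsto[OF a \<gamma> lim X, where B=1]) auto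
  moreover have "(\<lambda>n. \<integral>z. H n z \<partial>smat_lebesgue p) \<longlonglongrightarrow> (\<integral>z. exp (- (1/2) * tr_sq p z) \<partial>smat_lebesgue p)"
    using rescaled_beta_kernel_integral_tendsto[OF a \<gamma> lim X, of "\<lambda>_. 1" 1] tr_sq_nonneg
    unfolding H_def c_def by simp
  moreover have "c \<longlonglongrightarrow> 0" unfolding c_def by (rule beta_scaling_limits[OF \<gamma> lim])
  ultimately have "(\<lambda>n. (c n)\<^sup>2 * (\<integral>z. H n z * tr_sq p z \<partial>smat_lebesgue p) / (\<integral>z. H n z \<partial>smat_lebesgue p))
      \<longlonglongrightarrow> 0\<^sup>2 * (\<integral>z. exp (- (1/2) * tr_sq p z) * tr_sq p z \<partial>smat_lebesgue p)
          / (\<integral>z. exp (- (1/2) * tr_sq p z) \<partial>smat_lebesgue p)"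
    using gaussian_integral_pos[of "1/2" p] by (intro tendsto_intros) auto
  then have L: "(\<lambda>n. (c n)\<^sup>2 * (\<integral>z. H n z * tr_sq p z \<partial>smat_lebesgue p) / (\<integral>z. H n z \<partial>smat_lebesgue p))
      \<longlonglongrightarrow> 0"
    by simp
  have "eventually (\<lambda>n. (c n)\<^sup>2 * (\<integral>z. H n z * tr_sq p z \<partial>smat_lebesgue p) / (\<integral>z. H n z \<partial>smat_lebesgue p)
      = (\<integral>\<omega>. (frob_norm p (\<lambda>i j. symm (X n \<omega>) i j - idm i j / 2)) ^ 2 \<partial>M)) sequentially"
    using eventually_gt_at_top[of "0::nat"]
  proof eventually_elim
    case (elim n)
    then have "c n > 0" using \<gamma> by (simp add: c_def)
    then show ?case unfolding H_def by (rule beta_frobenius_sq_expectation[OF M a _ X, symmetric])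
  qed
  then show ?thesis by (rule Lim_transform_eventually[OF L])
qed

lemma beta_rescaled_weak_conv_goe:
  fixes M :: "'a measure" and a :: "nat \<Rightarrow> real" and X :: "nat \<Rightarrow> 'a \<Rightarrow> (nat \<times> nat \<Rightarrow> real)"
  assumes M: "prob_space M" and a: "\<And>n. a n > (real p - 1) / 2" and \<gamma>: "\<gamma> > 0"
    and lim: "(\<lambda>n. a n / real n) \<longlonglongrightarrow> \<gamma>"
    and X: "\<And>n. distributed M (smat_lebesgue p) (X n) (\<lambda>x. ennreal (beta_density p (a n) (a n) x))"
  shows "weak_conv_smat p (\<lambda>n. distr M (smat_lebesgue p) (\<lambda>\<omega>. rescale p (sqrt (8 * \<gamma> * real n)) (X n \<omega>)))
    (goe_measure p)"
  unfolding weak_conv_smat_def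
proof (intro allI impI)
  fix f :: "(nat \<times> nat \<Rightarrow> real) \<Rightarrow> real"
  assume bounded: "bounded (f ` space (smat_lebesgue p))"
    and f [measurable]: "f \<in> borel_measurable (smat_lebesgue p)"
  obtain B where B: "\<And>z. z \<in> space (smat_lebesgue p) \<Longrightarrow> \<bar>f z\<bar> \<le> B"
    using bounded unfolding bounded_iff by auto
  define H where "H n = beta_kernel p (1 / sqrt (8 * \<gamma> * real n)) (a n)" for n
  have "(\<lambda>n. \<integral>z. H n z * f z \<partial>smat_lebesgue p)
      \<longlonglongrightarrow> (\<integral>z. exp (- (1/2) * tr_sq p z) * f z \<partial>smat_lebesgue p)"
    unfolding H_def
  proof (rule rescaled_beta_kernel_integral_tendsto[OF a \<gamma> lim X f])
    fix z assume z: "z \<in> space (smat_lebesgue p)"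
    have "B * 1 \<le> \<bar>B\<bar> * (1 + tr_sq p z)"
      using tr_sq_nonneg[of p z] by (intro mult_mono) auto
    then show "\<bar>f z\<bar> \<le> \<bar>B\<bar> * (1 + tr_sq p z)" using B[OF z] by simp
  qed
  moreover have "(\<lambda>n. \<integral>z. H n z \<partial>smat_lebesgue p) \<longlonglongrightarrow> (\<integral>z. exp (- (1/2) * tr_sq p z) \<partial>smat_lebesgue p)"
    using rescaled_beta_kernel_integral_tendsto[OF a \<gamma> lim X, of "\<lambda>_. 1" 1] tr_sq_nonneg
    unfolding H_def by simp
  ultimately have "(\<lambda>n. (\<integral>z. H n z * f z \<partial>smat_lebesgue p) / (\<integral>z. H n z \<partial>smat_lebesgue p))
      \<longlonglongrightarrow> integral\<^sup>L (goe_measure p) f"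
    using gaussian_integral_pos[of "1/2" p] by (simp add: goe_integral tendsto_divide)
  moreover have "eventually (\<lambda>n. (\<integral>z. H n z * f z \<partial>smat_lebesgue p) / (\<integral>z. H n z \<partial>smat_lebesgue p)
      = integral\<^sup>L (distr M (smat_lebesgue p) (\<lambda>\<omega>. rescale p (sqrt (8 * \<gamma> * real n)) (X n \<omega>))) f)
      sequentially"
    using eventually_gt_at_top[of "0::nat"]
  proof eventually_elim
    case (elim n)
    then have "sqrt (8 * \<gamma> * real n) > 0" using \<gamma> by simp
    from beta_rescaled_distr_integral[OF M a this X f] show ?case by (simp add: H_def)
  qed
  ultimately show "(\<lambda>n. integral\<^sup>L (distr M (smat_lebesgue p)
      (\<lambda>\<omega>. rescale p (sqrt (8 * \<gamma> * real n)) (X n \<omega>))) f) \<longlonglongrightarrow> integral\<^sup>L (goe_measure p) f"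
    by (rule Lim_transform_eventually)
qed

text \<open>Theorem 4.2: both statements hold.\<close>

theorem theorem4p2:
  fixes M :: "'a measure" and p :: nat and a :: "nat \<Rightarrow> real" and \<gamma> :: real
    and X :: "nat \<Rightarrow> 'a \<Rightarrow> (nat \<times> nat \<Rightarrow> real)"
  assumes "prob_space M"
    and "p \<ge> 1"
    and "\<And>n. a n > (real p - 1) / 2"
    and "\<gamma> > 0"
    and "(\<lambda>n. a n / real n) \<longlonglongrightarrow> \<gamma>"
    and "\<And>n. distributed M (smat_lebesgue p) (X n) (\<lambda>x. ennreal (beta_density p (a n) (a n) x))"
  shows "((\<lambda>n. \<integral>\<omega>. (frob_norm p (\<lambda>i j. symm (X n \<omega>) i j - idm i j / 2)) ^ 2 \<partial>M)
           \<longlonglongrightarrow> 0)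
         \<and> weak_conv_smat p
           (\<lambda>n. distr M (smat_lebesgue p)
                  (\<lambda>\<omega>. restrict (\<lambda>(i, j). sqrt (8 * \<gamma> * real n)
                                   * (X n \<omega> (i, j) - idm i j / 2)) (utri p)))
           (goe_measure p)"
  using beta_frobenius_L2[OF assms(1,3-6)] beta_rescaled_weak_conv_goe[OF assms(1,3-6)]
  unfolding rescale_def by (intro conjI)

end
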